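(* Let $(\Omega,\mathcal{F},(\mathbb{F}_n)_{n\in\mathbb{N}_0},\mathbb{P})$ be a filtered probability space. For every $n\in\mathbb{N}$ let $\gamma_n\colon\Omega\to[0,\infty)$ be $\mathbb{F}_{n-1}$-measurable, and assume that for every $\omega\in\Omega$: $\limsup_{n\to\infty}\gamma_n(\omega)=0$, $\sum_{n=1}^\infty\gamma_n(\omega)=\infty$, and $\gamma_{n+1}(\omega)\le\gamma_n(\omega)$ for all $n\in\mathbb{N}$. Let $d\in\mathbb{N}$, let $g\colon\mathbb{R}^d\to\mathbb{R}^d$ be measurable and locally bounded, and let $c\in(0,\infty)$ satisfy $\langle\theta,g(\theta)\rangle\le -c\|\theta\|^2$ for all $\theta\in\mathbb{R}^d$. Let $D\colon\mathbb{N}\times\Omega\to\mathbb{R}^d$ be a stochastic process with $\mathbb{E}[\|D_n\|]<\infty$ and $\mathbb{E}[D_n\mid\mathbb{F}_{n-1}]=0$ $\mathbb{P}$-a.s. for all $n\in\mathbb{N}$. Let $\Theta\colon\mathbb{N}_0\times\Omega\to\mathbb{R}^d$ be an $(\mathbb{F}_n)_{n\in\mathbb{N}_0}$-adapted process such that for all $n\in\mathbb{N}$ $$\Theta_n=\Theta_{n-1}+\gamma_n g(\Theta_{n-1})+\gamma_n D_n.$$ For every $R\in\mathbb{R}$ let $\tau_R=\inf(\{n\in\mathbb{N}_0\colon\|\Theta_n\|^2\ge R\}\cup\{\infty\})$, and assume that $\mathbb{E}[\sup_{n\le\tau_R}\|D_n\|^2]<\infty$ for all $R\in\mathbb{R}$.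 For every $t\in[0,\infty)$ let $N_t=\inf\{n\in\mathbb{N}_0\colon\sum_{m=1}^n\gamma_m\ge t\}$, and let $\mathcal{E}=\{\sup_{n\in\mathbb{N}}\|\Theta_n\|<\infty\}$. Then (i) for all $\delta\in(0,\infty)$: $\limsup_{n\to\infty}\mathbb{E}\big[\min\{1,\|\Theta_{N_{n\delta}}\|\mathbb{1}_{\mathcal{E}}\}\big]=0$; (ii) for all $\delta\in(0,\infty)$: $\limsup_{n\to\infty}\mathbb{E}\big[\min\{1,(\max_{N_{n\delta}\le m\le N_{(n+1)\delta}}\|\Theta_m\|)\mathbb{1}_{\mathcal{E}}\}\big]=0$; (iii) $\limsup_{t\to\infty}\mathbb{E}\big[\min\{1,\|\Theta_{N_t}\|\mathbb{1}_{\mathcal{E}}\}\big]=0$.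
   Context: $\langle\cdot,\cdot\rangle$ and $\|\cdot\|$ denote the Euclidean inner product and norm; $\mathbb{1}_{\mathcal{E}}$ is the indicator function of $\mathcal{E}$. *)

theory Defs
  imports "HOL-Probability.Probability"
begin

text \<open>First entrance time tau_R = inf ({n in N0 : norm (Theta n) ^ 2 >= R} union {infinity}),
  as an extended natural number (Inf of the empty set of enat is infinity).\<close>
definition entrance_time :: "(nat \<Rightarrow> 'a \<Rightarrow> 'b::real_normed_vector) \<Rightarrow> real \<Rightarrow> 'a \<Rightarrow> enat" where
  "entrance_time \<Theta> R \<omega> = (INF n\<in>{n. norm (\<Theta> n \<omega>) ^ 2 \<ge> R}. enat n)"

definition time_index :: "(nat \<Rightarrow> 'a \<Rightarrow> real) \<Rightarrow> real \<Rightarrow> 'a \<Rightarrow> nat" where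
  "time_index \<gamma> t \<omega> = (LEAST n. (\<Sum>m=1..n. \<gamma> m \<omega>) \<ge> t)"

definition locally_bounded :: "('a::metric_space \<Rightarrow> 'b::real_normed_vector) \<Rightarrow> bool" where
  "locally_bounded g \<longleftrightarrow> (\<forall>x. \<exists>e>0. bounded (g ` ball x e))"

end

(* Expanding the recursion shows that, as long as Theta stays in a ball of radius sqrt R on which
   |g| is bounded by G, and |D_n|^2 is bounded by K,
     |Theta_n|^2 <= (1 - 2 c gamma_n) |Theta_(n-1)|^2 + 2 gamma_n <Theta_(n-1), D_n>
                    + 2 gamma_n^2 (G^2 + K).
   Over a stretch of elapsed time T the contraction factors multiply to exp (-2 c T), so |Theta|^2
   is at most R exp (-2 c T) plus the martingale term and the quadratic error. Once the step sizes
   are below eta, the quadratic error is of order eta, and the martingale term, whose increments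
   have second moments of order eta, is small with high probability by Kolmogorov's maximal
   inequality. On the event E, Theta stays in a ball of radius sqrt R, the running maximum of the
   noise stays below K, and the step sizes have dropped below eta, except with small probability
   once R, K and n are large; then Theta is small on the whole window from N_(n delta) to
   N_((n+1) delta). This gives (ii), and (i) and (iii) follow since N_t lies in such a window. *)
theory Submission
  imports Defs
begin

lemma norm_sq_coercive_step_le:
  fixes u v w :: "'a::real_inner"
  assumes coercive: "inner u v \<le> - c * norm u ^ 2" and v: "norm v \<le> G" and w: "norm w ^ 2 \<le> K"
    and s: "0 \<le> s"
  shows "norm (u + s *\<^sub>R v + s *\<^sub>R w) ^ 2
    \<le> (1 - 2 * c * s) * norm u ^ 2 + 2 * s * inner u w + 2 * s^2 * (G^2 + K)"
proof -
  have expand: "norm (u + s *\<^sub>R v + s *\<^sub>R w) ^ 2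
      = norm u ^ 2 + 2 * s * inner u v + 2 * s * inner u w + s^2 * norm (v + w) ^ 2"
    unfolding power2_norm_eq_inner
    by (simp add: inner_add_left inner_add_right inner_commute algebra_simps power2_eq_square)
  have "norm (v + w) ^ 2 \<le> (norm v + norm w) ^ 2"
    by (simp add: norm_triangle_ineq power_mono)
  also have "\<dots> \<le> 2 * norm v ^ 2 + 2 * norm w ^ 2"
    using power2_diff[of "norm v" "norm w"] zero_le_power2[of "norm v - norm w"]
    unfolding power2_sum by linarith
  also have "\<dots> \<le> 2 * G ^ 2 + 2 * K"
    using power_mono[OF v, of 2] w by simp
  finally have "s^2 * norm (v + w) ^ 2 \<le> s^2 * (2 * G ^ 2 + 2 * K)"
    by (simp add: mult_left_mono)
  moreover have "s * inner u v \<le> - c * s * norm u ^ 2"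
    using mult_left_mono[OF coercive s] by (simp add: algebra_simps)
  ultimately show ?thesis
    unfolding expand by (simp add: algebra_simps)
qed

lemma contraction_step_le:
  fixes z x \<alpha> B :: real
  assumes "z \<le> x" "0 \<le> x" "0 \<le> \<alpha>" "z \<le> B" "0 \<le> B"
  shows "z - \<alpha> * x \<le> exp (- \<alpha>) * B"
proof (cases "0 \<le> z")
  case True
  have "z - \<alpha> * x \<le> (1 - \<alpha>) * z"
    using mult_left_mono[OF assms(1,3)] by (simp add: algebra_simps)
  also have "\<dots> \<le> exp (- \<alpha>) * z"
    using True exp_ge_add_one_self[of "- \<alpha>"] by (intro mult_right_mono) auto
  also have "\<dots> \<le> exp (- \<alpha>) * B"
    using assms(4) by (intro mult_left_mono) auto
  finally show ?thesis .
next
  case False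
  have "0 \<le> \<alpha> * x" "0 \<le> exp (- \<alpha>) * B" using assms(2,3,5) by simp_all
  then show ?thesis using False by linarith
qed

lemma perturbed_contraction_bound:
  fixes x \<alpha> \<Delta> e :: "nat \<Rightarrow> real"
  assumes step: "\<And>j. k < j \<Longrightarrow> j \<le> m \<Longrightarrow> x j \<le> (1 - \<alpha> j) * x (j - 1) + 2 * \<Delta> j + e j"
    and rate_nonneg: "\<And>j. k < j \<Longrightarrow> j \<le> m \<Longrightarrow> 0 \<le> \<alpha> j"
    and x_nonneg: "\<And>j. 0 \<le> x j"
    and \<Delta>_sums: "\<And>j. k \<le> j \<Longrightarrow> j \<le> m \<Longrightarrow> \<bar>\<Sum>i\<in>{k<..j}. \<Delta> i\<bar> \<le> \<rho>"
    and e_nonneg: "\<And>j. k < j \<Longrightarrow> j \<le> m \<Longrightarrow> 0 \<le> e j"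
    and e_sum: "(\<Sum>i\<in>{k<..m}. e i) \<le> \<rho>"
    and start: "x k \<le> R" and "k \<le> m"
  shows "x m \<le> R * exp (- (\<Sum>i\<in>{k<..m}. \<alpha> i)) + 5 * \<rho>"
proof -
  define P where "P j = (\<Sum>i\<in>{k<..j}. \<Delta> i)" for j
  define Q where "Q j = (\<Sum>i\<in>{k<..j}. e i)" for j
  define A where "A j = (\<Sum>i\<in>{k<..j}. \<alpha> i)" for j
  have \<rho>: "0 \<le> \<rho>" using \<Delta>_sums[of k] \<open>k \<le> m\<close> by simp
  have R: "0 \<le> R" using start x_nonneg[of k] by linarith
  \<comment> \<open>Shifting by the perturbations accumulated since \<open>k\<close> turns the recursion into a contraction.\<close>
  have "x (k + d) - 2 * P (k + d) - Q (k + d) - 2 * \<rho> \<le> R * exp (- A (k + d))"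
    if "k + d \<le> m" for d
    using that
  proof (induction d)
    case 0
    then show ?case using start \<rho> by (simp add: P_def Q_def A_def)
  next
    case (Suc d)
    let ?j = "Suc (k + d)"
    define z where "z = x (k + d) - 2 * P (k + d) - Q (k + d) - 2 * \<rho>"
    have "{k<..?j} = insert ?j {k<..k + d}" by auto
    then have sums: "P ?j = P (k + d) + \<Delta> ?j" "Q ?j = Q (k + d) + e ?j" "A ?j = A (k + d) + \<alpha> ?j"
      by (simp_all add: P_def Q_def A_def)
    have "Q (k + d) \<ge> 0" unfolding Q_def by (rule sum_nonneg) (use e_nonneg Suc.prems in auto)
    moreover have "\<bar>P (k + d)\<bar> \<le> \<rho>" using \<Delta>_sums[of "k + d"] Suc.prems by (simp add: P_def)
    ultimately have "z \<le> x (k + d)" unfolding z_def by linarith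
    have "x ?j - 2 * P ?j - Q ?j - 2 * \<rho> \<le> z - \<alpha> ?j * x (k + d)"
      using step[of ?j] Suc.prems unfolding sums z_def by (simp add: algebra_simps)
    also have "\<dots> \<le> exp (- \<alpha> ?j) * (R * exp (- A (k + d)))"
      using \<open>z \<le> x (k + d)\<close> x_nonneg rate_nonneg[of ?j] Suc R unfolding z_def
      by (intro contraction_step_le) auto
    also have "\<dots> = R * exp (- A ?j)"
      unfolding sums by (simp add: algebra_simps flip: exp_add)
    finally show ?case by simp
  qed
  from this[of "m - k"] have "x m - 2 * P m - Q m - 2 * \<rho> \<le> R * exp (- A m)"
    using \<open>k \<le> m\<close> by simp
  moreover have "\<bar>P m\<bar> \<le> \<rho>" using \<Delta>_sums[of m] \<open>k \<le> m\<close> by (simp add: P_def)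
  ultimately show ?thesis using e_sum unfolding Q_def A_def by linarith
qed

lemma mult_le_if_squares_le:
  fixes x y s :: real
  assumes "0 \<le> x" "0 \<le> y" "x\<^sup>2 \<le> s" "y\<^sup>2 \<le> s"
  shows "x * y \<le> s"
proof -
  have "2 * (x * y) \<le> x\<^sup>2 + y\<^sup>2" using zero_le_power2[of "x - y"] unfolding power2_diff by linarith
  then show ?thesis using assms by linarith
qed

lemma sum_sq_le_mult_sum:
  fixes f :: "'a \<Rightarrow> real"
  assumes "\<And>i. i \<in> I \<Longrightarrow> 0 \<le> f i" "\<And>i. i \<in> I \<Longrightarrow> f i \<le> \<eta>"
  shows "(\<Sum>i\<in>I. f i ^ 2) \<le> \<eta> * (\<Sum>i\<in>I. f i)"
  unfolding sum_distrib_left power2_eq_square using assms by (intro sum_mono mult_right_mono) auto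

lemma exists_exp_decay_le:
  fixes k C e :: real
  assumes "0 < k" "0 < e"
  shows "\<exists>T\<ge>1. C * exp (- k * (T - 1)) \<le> e"
proof -
  define q where "q = max C e / e"
  have "1 \<le> q" using assms by (simp add: q_def)
  define T where "T = 1 + ln q / k"
  have "exp (- k * (T - 1)) = exp (- ln q)" using assms by (simp add: T_def)
  also have "\<dots> = 1 / q" using \<open>1 \<le> q\<close> by (simp add: exp_minus inverse_eq_divide)
  finally have "C * exp (- k * (T - 1)) = C / q" by simp
  also have "\<dots> \<le> e"
    using assms by (auto simp: q_def field_simps max_def)
  finally show ?thesis
    using assms \<open>1 \<le> q\<close> by (intro exI[of _ T]) (simp add: T_def)
qed

lemma tendsto_0_if_eventually_le:
  fixes f :: "'a \<Rightarrow> real"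
  assumes "eventually (\<lambda>x. 0 \<le> f x) F" and "\<And>e. 0 < e \<Longrightarrow> eventually (\<lambda>x. f x \<le> e) F"
  shows "(f \<longlongrightarrow> 0) F"
proof (rule order_tendstoI)
  show "eventually (\<lambda>x. a < f x) F" if "a < 0" for a
    using assms(1) by eventually_elim (use that in auto)
  show "eventually (\<lambda>x. f x < a) F" if "0 < a" for a
  proof -
    have "eventually (\<lambda>x. f x \<le> a / 2) F" using that by (intro assms(2)) simp
    then show ?thesis by eventually_elim (use that in auto)
  qed
qed

lemma eventually_mult_le_at_right_0:
  fixes A r :: real
  assumes "0 < r"
  shows "\<forall>\<^sub>F x in at_right 0. x * A \<le> r"
proof -
  have "((\<lambda>x. x * A) \<longlongrightarrow> 0 * A) (at_right 0)" by (intro tendsto_intros)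
  then have "\<forall>\<^sub>F x in at_right 0. x * A < r" using assms by (auto dest: order_tendstoD(2))
  then show ?thesis by (auto elim: eventually_mono)
qed

lemma eventually_less_real_mult_sequentially:
  fixes x \<delta> :: real
  assumes "0 < \<delta>"
  shows "\<forall>\<^sub>F n in sequentially. x < real n * \<delta>"
proof -
  obtain N :: nat where "x / \<delta> < real N" using reals_Archimedean2 by blast
  then have "x < real n * \<delta>" if "N \<le> n" for n
    using that assms by (auto simp: field_simps intro: less_le_trans mult_right_mono)
  then show ?thesis by (auto simp: eventually_sequentially)
qed

lemma Limsup_ereal_eq_0_if_tendsto:
  fixes f :: "'a \<Rightarrow> real"
  assumes "F \<noteq> bot" "(f \<longlongrightarrow> 0) F"
  shows "Limsup F (\<lambda>x. ereal (f x)) = 0"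
  using lim_imp_Limsup[OF assms(1) tendsto_ereal[OF assms(2)]] by (simp add: zero_ereal_def)

lemma locally_bounded_imp_bounded_image_compact:
  fixes g :: "'a::metric_space \<Rightarrow> 'b::real_normed_vector"
  assumes "locally_bounded g" and "compact K"
  shows "bounded (g ` K)"
proof -
  obtain e where e: "\<And>x. e x > 0 \<and> bounded (g ` ball x (e x))"
    using assms(1) unfolding locally_bounded_def by metis
  have "K \<subseteq> (\<Union>x\<in>K. ball x (e x))" using e by auto
  then obtain T where T: "T \<subseteq> K" "finite T" "K \<subseteq> (\<Union>x\<in>T. ball x (e x))"
    using compactE_image[OF assms(2), of K "\<lambda>x. ball x (e x)"] by auto
  then have "g ` K \<subseteq> (\<Union>x\<in>T. g ` ball x (e x))" by blast
  moreover have "bounded (\<Union>x\<in>T. g ` ball x (e x))" using T(2) e by auto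
  ultimately show ?thesis using bounded_subset by blast
qed

lemma borel_measurable_vec_nth [measurable (raw)]:
  fixes f :: "'a \<Rightarrow> real^'n"
  assumes "f \<in> borel_measurable N"
  shows "(\<lambda>x. f x $ k) \<in> borel_measurable N"
  by (rule measurable_compose[OF assms borel_measurable_continuous_onI]) (intro continuous_intros)

lemma (in finite_measure) measure_tendsto_0_if_eventually_notin:
  assumes "\<And>n. A n \<in> sets M" and "\<And>\<omega>. \<omega> \<in> space M \<Longrightarrow> \<forall>\<^sub>F n in sequentially. \<omega> \<notin> A n"
  shows "(\<lambda>n. measure M (A n)) \<longlonglongrightarrow> 0"
proof -
  have "(\<lambda>n. \<integral>\<omega>. indicator (A n) \<omega> \<partial>M) \<longlonglongrightarrow> (\<integral>\<omega>. 0 \<partial>M :: real)"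
  proof (rule integral_dominated_convergence[where w = "\<lambda>_. 1"])
    show "AE \<omega> in M. (\<lambda>n. indicator (A n) \<omega>) \<longlonglongrightarrow> (0::real)"
    proof (intro AE_I2 tendsto_eventually)
      fix \<omega> assume "\<omega> \<in> space M"
      with assms(2) show "\<forall>\<^sub>F n in sequentially. indicator (A n) \<omega> = (0::real)"
        by (auto intro: eventually_mono[of "\<lambda>n. \<omega> \<notin> A n"])
    qed
  qed (use assms(1) in auto)
  then show ?thesis using assms(1) by simp
qed

lemma (in finite_measure) integrable_min_1:
  fixes f :: "'a \<Rightarrow> real"
  assumes "f \<in> borel_measurable M" "\<And>\<omega>. \<omega> \<in> space M \<Longrightarrow> 0 \<le> f \<omega>"
  shows "integrable M (\<lambda>\<omega>. min 1 (f \<omega>))"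
proof (rule Bochner_Integration.integrable_bound[of _ "\<lambda>_. 1::real"])
  show "(\<lambda>\<omega>. min 1 (f \<omega>)) \<in> borel_measurable M" using assms(1) by measurable
  show "AE \<omega> in M. norm (min 1 (f \<omega>)) \<le> norm (1::real)" using assms(2) by (intro AE_I2) simp
qed simp

lemma (in prob_space) expectation_le_if_small_off_event:
  fixes f :: "'a \<Rightarrow> real"
  assumes [measurable]: "f \<in> borel_measurable M" and B: "B \<in> events" and "0 \<le> e"
    and bounds: "\<And>\<omega>. \<omega> \<in> space M \<Longrightarrow> 0 \<le> f \<omega> \<and> f \<omega> \<le> 1"
    and small: "AE \<omega> in M. \<omega> \<notin> B \<longrightarrow> f \<omega> \<le> e"
  shows "expectation f \<le> e + prob B"
proof -
  have integrable: "integrable M (\<lambda>\<omega>. e + indicator B \<omega>)"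
    using B by (simp add: integrable_indicator_iff emeasure_finite less_top[symmetric])
  have "expectation f \<le> expectation (\<lambda>\<omega>. e + indicator B \<omega>)"
  proof (rule integral_mono_AE[OF _ integrable])
    show "integrable M f"
    proof (rule Bochner_Integration.integrable_bound[of _ "\<lambda>_. 1::real"])
      show "AE \<omega> in M. norm (f \<omega>) \<le> norm (1::real)" using bounds by (intro AE_I2) auto
    qed simp_all
    show "AE \<omega> in M. f \<omega> \<le> e + indicator B \<omega>"
      using small AE_space
    proof eventually_elim
      case (elim \<omega>)
      then show ?case using bounds[of \<omega>] \<open>0 \<le> e\<close> by (cases "\<omega> \<in> B") auto
    qed
  qed
  also have "\<dots> = e + prob B"
    using B by (simp add: integrable_indicator_iff emeasure_finite less_top[symmetric] prob_space
        Int_absorb2 sets.sets_into_space)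
  finally show ?thesis .
qed

section \<open>Kolmogorov's maximal inequality\<close>

locale filtered_finite_measure = finite_measure M for M :: "'a measure" +
  fixes F :: "nat \<Rightarrow> 'a measure"
  assumes subalgebra_F: "\<And>n. subalgebra M (F n)"
    and sets_F_mono: "\<And>n m. n \<le> m \<Longrightarrow> sets (F n) \<subseteq> sets (F m)"
begin

lemma space_F: "space (F n) = space M"
  using subalgebra_F[of n] by (simp add: subalgebra_def)

lemma sets_F_subset: "sets (F n) \<subseteq> sets M"
  using subalgebra_F[of n] by (simp add: subalgebra_def)

lemma measurable_F_mono: "l \<le> n \<Longrightarrow> f \<in> measurable (F l) N \<Longrightarrow> f \<in> measurable (F n) N"
  by (rule measurable_from_subalg[of "F n" "F l"]) (simp add: subalgebra_def space_F sets_F_mono)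

lemma measurable_F_imp_M: "f \<in> measurable (F n) N \<Longrightarrow> f \<in> measurable M N"
  by (rule measurable_from_subalg[OF subalgebra_F])

lemma integral_mult_eq_0_if_real_cond_exp_eq_0:
  assumes "f \<in> borel_measurable (F n)" "Y \<in> borel_measurable M"
    and "integrable M (\<lambda>x. f x * Y x)" and "AE x in M. real_cond_exp M (F n) Y x = 0"
  shows "(\<integral>x. f x * Y x \<partial>M) = 0"
proof -
  interpret sigma_finite_subalgebra M "F n"
    by (intro finite_measure_subalgebra_is_sigma_finite)
      (simp add: finite_measure_subalgebra_def finite_measure_subalgebra_axioms_def
        subalgebra_F finite_measure_axioms)
  have "(\<integral>x. f x * Y x \<partial>M) = (\<integral>x. f x * real_cond_exp M (F n) Y x \<partial>M)"
    using real_cond_exp_intg(2) assms(1-3) by metis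
  also have "\<dots> = 0"
    using assms(4) by (intro integral_eq_zero_AE) auto
  finally show ?thesis .
qed

end

locale orthogonal_increments = filtered_finite_measure +
  fixes X :: "nat \<Rightarrow> 'a \<Rightarrow> real"
  assumes adapted: "\<And>i. X i \<in> borel_measurable (F i)"
    and integrable_mult: "\<And>i j. integrable M (\<lambda>\<omega>. X i \<omega> * X j \<omega>)"
    and orthogonal: "\<And>i j A. 1 \<le> i \<Longrightarrow> i < j \<Longrightarrow> A \<in> sets (F (j - 1)) \<Longrightarrow>
      (\<integral>\<omega>. X i \<omega> * X j \<omega> * indicator A \<omega> \<partial>M) = 0"
begin

definition partial_sum :: "nat \<Rightarrow> 'a \<Rightarrow> real" where
  "partial_sum n \<omega> = (\<Sum>i=1..n. X i \<omega>)"

lemma partial_sum_Suc: "partial_sum (Suc n) \<omega> = partial_sum n \<omega> + X (Suc n) \<omega>"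
  by (simp add: partial_sum_def)

lemma partial_sum_split:
  "k \<le> n \<Longrightarrow> partial_sum n \<omega> = partial_sum k \<omega> + (\<Sum>i\<in>{k<..n}. X i \<omega>)"
proof -
  assume "k \<le> n"
  then have "{1..n} = {1..k} \<union> {k<..n}" "{1..k} \<inter> {k<..n} = {}" by auto
  then show ?thesis unfolding partial_sum_def by (simp add: sum.union_disjoint)
qed

lemma partial_sum_measurable_F: "k \<le> n \<Longrightarrow> partial_sum k \<in> borel_measurable (F n)"
  unfolding partial_sum_def
  by (intro borel_measurable_sum measurable_F_mono[OF _ adapted]) auto

lemma integrable_partial_sum_mult_X: "integrable M (\<lambda>\<omega>. partial_sum k \<omega> * X j \<omega>)"
  unfolding partial_sum_def sum_distrib_right
  by (intro Bochner_Integration.integrable_sum integrable_mult)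

lemma integrable_partial_sum_mult: "integrable M (\<lambda>\<omega>. partial_sum k \<omega> * partial_sum n \<omega>)"
  unfolding partial_sum_def[of n] sum_distrib_left
  by (intro Bochner_Integration.integrable_sum integrable_partial_sum_mult_X)

lemma partial_sum_orthogonal:
  assumes "k < j" "A \<in> sets (F (j - 1))"
  shows "(\<integral>\<omega>. partial_sum k \<omega> * X j \<omega> * indicator A \<omega> \<partial>M) = 0"
proof -
  have "(\<integral>\<omega>. partial_sum k \<omega> * X j \<omega> * indicator A \<omega> \<partial>M)
      = (\<Sum>i=1..k. \<integral>\<omega>. X i \<omega> * X j \<omega> * indicator A \<omega> \<partial>M)"
    unfolding partial_sum_def sum_distrib_right
    using assms sets_F_subset
    by (intro Bochner_Integration.integral_sum integrable_real_mult_indicator integrable_mult) auto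
  also have "\<dots> = 0"
    using assms by (intro sum.neutral ballI orthogonal) auto
  finally show ?thesis .
qed

lemma integrable_partial_sum_sq_mult_indicator:
  "A \<in> sets M \<Longrightarrow> integrable M (\<lambda>\<omega>. partial_sum n \<omega> ^ 2 * indicator A \<omega>)"
  using integrable_real_mult_indicator[OF _ integrable_partial_sum_mult[of n n]]
  by (simp add: power2_eq_square)

lemma set_integral_partial_sum_sq_mono:
  assumes "k \<le> n" and A: "A \<in> sets (F k)"
  shows "(\<integral>\<omega>. partial_sum k \<omega> ^ 2 * indicator A \<omega> \<partial>M)
    \<le> (\<integral>\<omega>. partial_sum n \<omega> ^ 2 * indicator A \<omega> \<partial>M)"
proof -
  have A_M: "A \<in> sets M" using A sets_F_subset by blast
  note int_S = integrable_partial_sum_sq_mult_indicator[OF A_M]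
  define T where "T \<omega> = (\<Sum>i\<in>{k<..n}. X i \<omega>)" for \<omega>
  have int_T: "integrable M (\<lambda>\<omega>. partial_sum k \<omega> * T \<omega> * indicator A \<omega>)"
    unfolding T_def sum_distrib_left sum_distrib_right
    by (intro Bochner_Integration.integrable_sum integrable_real_mult_indicator
        integrable_partial_sum_mult_X A_M)
  have "(\<integral>\<omega>. partial_sum k \<omega> * T \<omega> * indicator A \<omega> \<partial>M)
      = (\<Sum>i\<in>{k<..n}. \<integral>\<omega>. partial_sum k \<omega> * X i \<omega> * indicator A \<omega> \<partial>M)"
    unfolding T_def sum_distrib_left sum_distrib_right
    by (intro Bochner_Integration.integral_sum integrable_real_mult_indicator
        integrable_partial_sum_mult_X A_M)
  also have "\<dots> = 0"
    by (intro sum.neutral ballI partial_sum_orthogonal) (auto intro: subsetD[OF sets_F_mono A])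
  finally have cross: "(\<integral>\<omega>. partial_sum k \<omega> * T \<omega> * indicator A \<omega> \<partial>M) = 0" .
  have "(\<integral>\<omega>. partial_sum k \<omega> ^ 2 * indicator A \<omega> \<partial>M)
      = (\<integral>\<omega>. partial_sum k \<omega> ^ 2 * indicator A \<omega> + 2 * (partial_sum k \<omega> * T \<omega> * indicator A \<omega>) \<partial>M)"
    using int_S int_T cross by simp
  also have "\<dots> \<le> (\<integral>\<omega>. partial_sum n \<omega> ^ 2 * indicator A \<omega> \<partial>M)"
  proof (rule integral_mono)
    show "integrable M (\<lambda>\<omega>. partial_sum k \<omega> ^ 2 * indicator A \<omega>
        + 2 * (partial_sum k \<omega> * T \<omega> * indicator A \<omega>))"
      using int_S int_T by simp
    show "partial_sum k \<omega> ^ 2 * indicator A \<omega> + 2 * (partial_sum k \<omega> * T \<omega> * indicator A \<omega>)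
        \<le> partial_sum n \<omega> ^ 2 * indicator A \<omega>" for \<omega>
      using partial_sum_split[OF \<open>k \<le> n\<close>, of \<omega>]
      by (auto simp: T_def power2_eq_square indicator_def algebra_simps)
  qed (rule int_S)
  finally show ?thesis .
qed

lemma integral_partial_sum_sq: "(\<integral>\<omega>. partial_sum n \<omega> ^ 2 \<partial>M) = (\<Sum>i=1..n. \<integral>\<omega>. X i \<omega> ^ 2 \<partial>M)"
proof (induction n)
  case 0
  then show ?case by (simp add: partial_sum_def)
next
  case (Suc n)
  have "(\<integral>\<omega>. partial_sum n \<omega> * X (Suc n) \<omega> \<partial>M)
      = (\<integral>\<omega>. partial_sum n \<omega> * X (Suc n) \<omega> * indicator (space (F n)) \<omega> \<partial>M)"
    by (intro Bochner_Integration.integral_cong) (auto simp: space_F)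
  also have "\<dots> = 0" by (intro partial_sum_orthogonal) auto
  finally have cross: "(\<integral>\<omega>. partial_sum n \<omega> * X (Suc n) \<omega> \<partial>M) = 0" .
  have "integrable M (\<lambda>\<omega>. partial_sum n \<omega> ^ 2)" "integrable M (\<lambda>\<omega>. X (Suc n) \<omega> ^ 2)"
    using integrable_partial_sum_mult[of n n] integrable_mult[of "Suc n" "Suc n"]
    by (simp_all add: power2_eq_square)
  then have "(\<integral>\<omega>. partial_sum (Suc n) \<omega> ^ 2 \<partial>M) = (\<integral>\<omega>. partial_sum n \<omega> ^ 2 \<partial>M)
      + 2 * (\<integral>\<omega>. partial_sum n \<omega> * X (Suc n) \<omega> \<partial>M) + (\<integral>\<omega>. X (Suc n) \<omega> ^ 2 \<partial>M)"
    using integrable_partial_sum_mult_X[of n "Suc n"]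
    by (simp add: partial_sum_Suc power2_sum mult.assoc)
  then show ?case using cross Suc.IH by simp
qed

definition first_passage :: "real \<Rightarrow> nat \<Rightarrow> 'a set" where
  "first_passage r k = {\<omega>\<in>space M. r \<le> \<bar>partial_sum k \<omega>\<bar> \<and> (\<forall>i<k. \<bar>partial_sum i \<omega>\<bar> < r)}"

lemma first_passage_sets_F: "first_passage r k \<in> sets (F k)"
proof -
  have [measurable]: "partial_sum i \<in> borel_measurable (F k)" if "i \<le> k" for i
    using partial_sum_measurable_F[OF that] .
  have "first_passage r k = {\<omega>\<in>space (F k). r \<le> \<bar>partial_sum k \<omega>\<bar>}
      \<inter> {\<omega>\<in>space (F k). \<forall>i\<in>{..<k}. \<bar>partial_sum i \<omega>\<bar> < r}"
    by (auto simp: first_passage_def space_F)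
  also have "\<dots> \<in> sets (F k)"
    by (intro sets.Int sets.sets_Collect_finite_All) auto
  finally show ?thesis .
qed

lemma disjoint_family_first_passage: "disjoint_family (first_passage r)"
  unfolding disjoint_family_on_def first_passage_def
  by (auto, metis linorder_neqE_nat not_less)

lemma UN_first_passage:
  "(\<Union>k\<le>n. first_passage r k) = {\<omega>\<in>space M. \<exists>j\<le>n. r \<le> \<bar>partial_sum j \<omega>\<bar>}"
proof (intro equalityI subsetI)
  fix \<omega> assume "\<omega> \<in> {\<omega>\<in>space M. \<exists>j\<le>n. r \<le> \<bar>partial_sum j \<omega>\<bar>}"
  then obtain j where j: "\<omega> \<in> space M" "j \<le> n" "r \<le> \<bar>partial_sum j \<omega>\<bar>" by auto
  define k where "k = (LEAST k. r \<le> \<bar>partial_sum k \<omega>\<bar>)"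
  have "r \<le> \<bar>partial_sum k \<omega>\<bar>" "k \<le> j"
    unfolding k_def using j(3) by (auto intro: LeastI Least_le)
  moreover have "\<bar>partial_sum i \<omega>\<bar> < r" if "i < k" for i
    using not_less_Least[OF that[unfolded k_def]] by simp
  ultimately show "\<omega> \<in> (\<Union>k\<le>n. first_passage r k)"
    using j by (auto simp: first_passage_def)
qed (auto simp: first_passage_def)

lemma measure_first_passage_le:
  assumes "0 < r" "k \<le> n"
  shows "r\<^sup>2 * measure M (first_passage r k)
    \<le> (\<integral>\<omega>. partial_sum n \<omega> ^ 2 * indicator (first_passage r k) \<omega> \<partial>M)"
proof -
  have A: "first_passage r k \<in> sets M" using first_passage_sets_F sets_F_subset by blast
  have "r\<^sup>2 * measure M (first_passage r k) = (\<integral>\<omega>. r\<^sup>2 * indicator (first_passage r k) \<omega> \<partial>M)"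
    using A by simp
  also have "\<dots> \<le> (\<integral>\<omega>. partial_sum k \<omega> ^ 2 * indicator (first_passage r k) \<omega> \<partial>M)"
  proof (rule integral_mono)
    show "integrable M (\<lambda>\<omega>. r\<^sup>2 * indicator (first_passage r k) \<omega>)"
      using A by (simp add: integrable_indicator_iff emeasure_finite less_top[symmetric])
    show "r\<^sup>2 * indicator (first_passage r k) \<omega>
        \<le> partial_sum k \<omega> ^ 2 * indicator (first_passage r k) \<omega>" for \<omega>
    proof (cases "\<omega> \<in> first_passage r k")
      case True
      then have "r \<le> \<bar>partial_sum k \<omega>\<bar>" by (simp add: first_passage_def)
      then have "r\<^sup>2 \<le> \<bar>partial_sum k \<omega>\<bar>\<^sup>2" using assms by (intro power_mono) auto
      then show ?thesis using True by simp
    qed simp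
  qed (rule integrable_partial_sum_sq_mult_indicator[OF A])
  also have "\<dots> \<le> (\<integral>\<omega>. partial_sum n \<omega> ^ 2 * indicator (first_passage r k) \<omega> \<partial>M)"
    using assms by (intro set_integral_partial_sum_sq_mono first_passage_sets_F)
  finally show ?thesis .
qed

theorem kolmogorov_maximal_inequality:
  assumes "0 < r"
  shows "r\<^sup>2 * measure M {\<omega>\<in>space M. \<exists>j\<le>n. r \<le> \<bar>partial_sum j \<omega>\<bar>}
    \<le> (\<Sum>i=1..n. \<integral>\<omega>. X i \<omega> ^ 2 \<partial>M)"
proof -
  have A: "first_passage r k \<in> sets M" for k
    using first_passage_sets_F sets_F_subset by blast
  have "r\<^sup>2 * measure M {\<omega>\<in>space M. \<exists>j\<le>n. r \<le> \<bar>partial_sum j \<omega>\<bar>}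
      = (\<Sum>k\<le>n. r\<^sup>2 * measure M (first_passage r k))"
    unfolding UN_first_passage[symmetric]
    using disjoint_family_first_passage A
    by (subst measure_finite_Union) (auto simp: disjoint_family_on_def sum_distrib_left)
  also have "\<dots> \<le> (\<Sum>k\<le>n. \<integral>\<omega>. partial_sum n \<omega> ^ 2 * indicator (first_passage r k) \<omega> \<partial>M)"
    using assms by (intro sum_mono measure_first_passage_le) auto
  also have "\<dots> = (\<integral>\<omega>. (\<Sum>k\<le>n. partial_sum n \<omega> ^ 2 * indicator (first_passage r k) \<omega>) \<partial>M)"
    by (intro Bochner_Integration.integral_sum[symmetric] integrable_partial_sum_sq_mult_indicator A)
  also have "\<dots> \<le> (\<integral>\<omega>. partial_sum n \<omega> ^ 2 \<partial>M)"
  proof (rule integral_mono)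
    show "integrable M (\<lambda>\<omega>. \<Sum>k\<le>n. partial_sum n \<omega> ^ 2 * indicator (first_passage r k) \<omega>)"
      by (intro Bochner_Integration.integrable_sum integrable_partial_sum_sq_mult_indicator A)
    show "integrable M (\<lambda>\<omega>. partial_sum n \<omega> ^ 2)"
      using integrable_partial_sum_mult[of n n] by (simp add: power2_eq_square)
    fix \<omega>
    have "(\<Sum>k\<le>n. indicator (first_passage r k) \<omega>) = (indicator (\<Union>k\<le>n. first_passage r k) \<omega> :: real)"
      using disjoint_family_first_passage
      by (intro indicator_UN_disjoint[symmetric]) (auto simp: disjoint_family_on_def)
    then show "(\<Sum>k\<le>n. partial_sum n \<omega> ^ 2 * indicator (first_passage r k) \<omega>) \<le> partial_sum n \<omega> ^ 2"
      by (simp add: indicator_def flip: sum_distrib_left)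
  qed
  also have "\<dots> = (\<Sum>i=1..n. \<integral>\<omega>. X i \<omega> ^ 2 \<partial>M)"
    by (rule integral_partial_sum_sq)
  finally show ?thesis .
qed

corollary kolmogorov_maximal_inequality_sup:
  assumes "0 < r" and bound: "\<And>n. (\<Sum>i=1..n. \<integral>\<omega>. X i \<omega> ^ 2 \<partial>M) \<le> B"
  shows "r\<^sup>2 * measure M {\<omega>\<in>space M. \<exists>j. r \<le> \<bar>partial_sum j \<omega>\<bar>} \<le> B"
proof -
  define A where "A n = {\<omega>\<in>space M. \<exists>j\<le>n. r \<le> \<bar>partial_sum j \<omega>\<bar>}" for n
  have "range A \<subseteq> sets M"
    unfolding A_def UN_first_passage[symmetric] using first_passage_sets_F sets_F_subset by blast
  moreover have "incseq A"
    unfolding A_def incseq_def by (auto intro: order_trans)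
  ultimately have lim: "(\<lambda>n. r\<^sup>2 * measure M (A n)) \<longlonglongrightarrow> r\<^sup>2 * measure M (\<Union>n. A n)"
    by (intro tendsto_mult tendsto_const finite_Lim_measure_incseq)
  have "r\<^sup>2 * measure M (A n) \<le> B" for n
    using kolmogorov_maximal_inequality[OF assms(1), of n] bound[of n] unfolding A_def by linarith
  then have "r\<^sup>2 * measure M (\<Union>n. A n) \<le> B"
    by (intro LIMSEQ_le_const2[OF lim]) auto
  moreover have "(\<Union>n. A n) = {\<omega>\<in>space M. \<exists>j. r \<le> \<bar>partial_sum j \<omega>\<bar>}"
    unfolding A_def by auto
  ultimately show ?thesis by simp
qed

end

section \<open>The stochastic approximation scheme\<close>

locale stochastic_approximation = prob_space M + filtered_finite_measure M F
  for M :: "'a measure" and F :: "nat \<Rightarrow> 'a measure" +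
  fixes \<gamma> :: "nat \<Rightarrow> 'a \<Rightarrow> real"
    and g :: "real^'d \<Rightarrow> real^'d"
    and c :: real
    and D :: "nat \<Rightarrow> 'a \<Rightarrow> real^'d"
    and \<Theta> :: "nat \<Rightarrow> 'a \<Rightarrow> real^'d"
  assumes gamma_meas: "\<And>n. n \<ge> 1 \<Longrightarrow> \<gamma> n \<in> borel_measurable (F (n - 1))"
    and gamma_nonneg: "\<And>n \<omega>. n \<ge> 1 \<Longrightarrow> \<omega> \<in> space M \<Longrightarrow> \<gamma> n \<omega> \<ge> 0"
    and gamma_limsup: "\<And>\<omega>. \<omega> \<in> space M \<Longrightarrow> limsup (\<lambda>n. ereal (\<gamma> n \<omega>)) = 0"
    and gamma_sum: "\<And>\<omega>. \<omega> \<in> space M \<Longrightarrow> (\<Sum>n. ennreal (\<gamma> (Suc n) \<omega>)) = \<infinity>"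
    and gamma_mono: "\<And>n \<omega>. n \<ge> 1 \<Longrightarrow> \<omega> \<in> space M \<Longrightarrow> \<gamma> (Suc n) \<omega> \<le> \<gamma> n \<omega>"
    and g_meas: "g \<in> borel_measurable borel"
    and g_locbdd: "locally_bounded g"
    and c_pos: "c > 0"
    and g_coercive: "\<And>\<theta>. inner \<theta> (g \<theta>) \<le> - c * norm \<theta> ^ 2"
    and D_int: "\<And>n. n \<ge> 1 \<Longrightarrow> integrable M (D n)"
    and D_mart: "\<And>n i. n \<ge> 1 \<Longrightarrow>
        AE \<omega> in M. real_cond_exp M (F (n - 1)) (\<lambda>x. D n x $ i) \<omega> = 0"
    and Theta_adapted: "\<And>n. \<Theta> n \<in> borel_measurable (F n)"
    and Theta_rec: "\<And>n \<omega>. n \<ge> 1 \<Longrightarrow> \<omega> \<in> space M \<Longrightarrow>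
        \<Theta> n \<omega> = \<Theta> (n - 1) \<omega> + \<gamma> n \<omega> *\<^sub>R g (\<Theta> (n - 1) \<omega>) + \<gamma> n \<omega> *\<^sub>R D n \<omega>"
    and D_sup_int: "\<And>R. (\<integral>\<^sup>+ \<omega>. (SUP n\<in>{n. n \<ge> 1 \<and> enat n \<le> entrance_time \<Theta> R \<omega>}.
        ennreal (norm (D n \<omega>) ^ 2)) \<partial>M) < \<infinity>"
begin

lemma Theta_measurable [measurable]: "\<Theta> n \<in> borel_measurable M"
  by (rule measurable_F_imp_M[OF Theta_adapted])

lemma gamma_measurable: "n \<ge> 1 \<Longrightarrow> \<gamma> n \<in> borel_measurable M"
  by (rule measurable_F_imp_M[OF gamma_meas])

lemma D_measurable: "n \<ge> 1 \<Longrightarrow> D n \<in> borel_measurable M"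
  using D_int by (rule borel_measurable_integrable)

lemma gamma_antimono:
  assumes "\<omega> \<in> space M" "1 \<le> k" "k \<le> j"
  shows "\<gamma> j \<omega> \<le> \<gamma> k \<omega>"
  using assms(3)
proof (induction j rule: dec_induct)
  case (step j)
  then show ?case using gamma_mono[of j \<omega>] assms by auto
qed simp

lemma gamma_tendsto_0: "\<omega> \<in> space M \<Longrightarrow> (\<lambda>n. \<gamma> n \<omega>) \<longlonglongrightarrow> 0"
proof (rule limsup_le_liminf_real)
  assume \<omega>: "\<omega> \<in> space M"
  show "limsup (\<lambda>n. ereal (\<gamma> n \<omega>)) \<le> ereal 0" using gamma_limsup[OF \<omega>] by simp
  show "ereal 0 \<le> liminf (\<lambda>n. ereal (\<gamma> n \<omega>))"
    using gamma_nonneg[OF _ \<omega>]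
    by (intro Liminf_bounded) (auto simp: eventually_sequentially intro!: exI[of _ 1])
qed

definition elapsed_time :: "nat \<Rightarrow> 'a \<Rightarrow> real" where
  "elapsed_time n \<omega> = (\<Sum>m=1..n. \<gamma> m \<omega>)"

lemma elapsed_time_0 [simp]: "elapsed_time 0 \<omega> = 0"
  by (simp add: elapsed_time_def)

lemma elapsed_time_Suc: "elapsed_time (Suc n) \<omega> = elapsed_time n \<omega> + \<gamma> (Suc n) \<omega>"
  by (simp add: elapsed_time_def)

lemma elapsed_time_measurable_F: "n < j \<Longrightarrow> elapsed_time n \<in> borel_measurable (F (j - 1))"
  unfolding elapsed_time_def by (intro borel_measurable_sum measurable_F_mono[OF _ gamma_meas]) auto

lemma elapsed_time_measurable [measurable]: "elapsed_time n \<in> borel_measurable M"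
  by (rule measurable_F_imp_M[OF elapsed_time_measurable_F[of n "Suc n"]]) simp

lemma elapsed_time_mono: "\<omega> \<in> space M \<Longrightarrow> n \<le> m \<Longrightarrow> elapsed_time n \<omega> \<le> elapsed_time m \<omega>"
  unfolding elapsed_time_def by (intro sum_mono2) (auto intro: gamma_nonneg)

lemma elapsed_time_diff:
  assumes "k \<le> j"
  shows "(\<Sum>i\<in>{k<..j}. \<gamma> i \<omega>) = elapsed_time j \<omega> - elapsed_time k \<omega>"
proof -
  have "{1..j} = {1..k} \<union> {k<..j}" "{1..k} \<inter> {k<..j} = {}" using assms by auto
  then show ?thesis unfolding elapsed_time_def by (simp add: sum.union_disjoint)
qed

lemma elapsed_time_unbounded:
  assumes \<omega>: "\<omega> \<in> space M"
  shows "\<exists>n. t \<le> elapsed_time n \<omega>"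
proof (rule ccontr)
  assume "\<not> ?thesis"
  then have below: "elapsed_time n \<omega> \<le> t" for n by (meson not_le less_imp_le)
  have "(\<Sum>i<n. ennreal (\<gamma> (Suc i) \<omega>)) = ennreal (elapsed_time n \<omega>)" for n
  proof (induction n)
    case (Suc n)
    then show ?case
      using gamma_nonneg[OF _ \<omega>, of "Suc n"] elapsed_time_mono[OF \<omega>, of 0 n]
      by (simp add: elapsed_time_Suc ennreal_plus[symmetric] del: ennreal_plus)
  qed simp
  then have "(\<Sum>n. ennreal (\<gamma> (Suc n) \<omega>)) \<le> ennreal t"
    using below by (intro suminf_le_const[OF summableI]) (simp add: ennreal_leI)
  then show False using gamma_sum[OF \<omega>] by (simp add: top_unique)
qed

lemma time_index_eq_Least: "time_index \<gamma> t \<omega> = (LEAST n. t \<le> elapsed_time n \<omega>)"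
  by (simp add: time_index_def elapsed_time_def)

lemma le_elapsed_time_time_index: "\<omega> \<in> space M \<Longrightarrow> t \<le> elapsed_time (time_index \<gamma> t \<omega>) \<omega>"
  unfolding time_index_eq_Least using elapsed_time_unbounded by (metis LeastI_ex)

lemma elapsed_time_less_if_less_time_index: "n < time_index \<gamma> t \<omega> \<Longrightarrow> elapsed_time n \<omega> < t"
  unfolding time_index_eq_Least using not_less_Least by (metis not_le)

lemma time_index_le: "t \<le> elapsed_time n \<omega> \<Longrightarrow> time_index \<gamma> t \<omega> \<le> n"
  unfolding time_index_eq_Least by (rule Least_le)

lemma time_index_mono: "\<omega> \<in> space M \<Longrightarrow> t \<le> t' \<Longrightarrow> time_index \<gamma> t \<omega> \<le> time_index \<gamma> t' \<omega>"
  using time_index_le le_elapsed_time_time_index by (meson order.trans)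

lemma time_index_pos: "0 < t \<Longrightarrow> \<omega> \<in> space M \<Longrightarrow> 1 \<le> time_index \<gamma> t \<omega>"
  using le_elapsed_time_time_index[of \<omega> t] by (cases "time_index \<gamma> t \<omega>") auto

lemma time_index_measurable [measurable]: "time_index \<gamma> t \<in> measurable M (count_space UNIV)"
  unfolding time_index_eq_Least by measurable

lemma elapsed_time_time_index_less:
  assumes "0 < t" "\<omega> \<in> space M"
  shows "elapsed_time (time_index \<gamma> t \<omega>) \<omega> < t + \<gamma> (time_index \<gamma> t \<omega>) \<omega>"
proof -
  obtain k where k: "time_index \<gamma> t \<omega> = Suc k"
    using time_index_pos[OF assms] by (cases "time_index \<gamma> t \<omega>") auto
  then have "elapsed_time k \<omega> < t" using elapsed_time_less_if_less_time_index[of k t \<omega>] by simp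
  then show ?thesis using k by (simp add: elapsed_time_Suc)
qed

lemma Theta_time_index_measurable: "(\<lambda>\<omega>. \<Theta> (time_index \<gamma> t \<omega>) \<omega>) \<in> borel_measurable M"
  by (rule measurable_compose_countable[OF Theta_measurable time_index_measurable])

section \<open>Localisation at the entrance time\<close>

definition up_to_entrance :: "real \<Rightarrow> nat \<Rightarrow> 'a \<Rightarrow> bool" where
  "up_to_entrance R n \<omega> \<longleftrightarrow> 1 \<le> n \<and> (\<forall>l<n. norm (\<Theta> l \<omega>) ^ 2 < R)"

definition noise_sup_enn :: "real \<Rightarrow> 'a \<Rightarrow> ennreal" where
  "noise_sup_enn R \<omega> = (SUP n. if up_to_entrance R n \<omega> then ennreal (norm (D n \<omega>) ^ 2) else 0)"

text \<open>\<open>enn2real\<close> sends \<open>\<infinity>\<close> to \<open>0\<close>; by \<open>AE_noise_sup_enn_finite\<close> this happens only on a null set.\<close>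

definition noise_sup :: "real \<Rightarrow> 'a \<Rightarrow> real" where
  "noise_sup R \<omega> = enn2real (noise_sup_enn R \<omega>)"

lemma up_to_entrance_pred_F: "Measurable.pred (F (n - 1)) (up_to_entrance R n)"
proof (cases "1 \<le> n")
  case True
  then have "up_to_entrance R n = (\<lambda>\<omega>. \<forall>l\<in>{..<n}. norm (\<Theta> l \<omega>) ^ 2 < R)"
    by (auto simp: up_to_entrance_def)
  also have "Measurable.pred (F (n - 1)) \<dots>"
  proof (intro pred_intros_finite(3) finite_lessThan)
    fix l assume "l \<in> {..<n}"
    then have [measurable]: "\<Theta> l \<in> borel_measurable (F (n - 1))"
      by (intro measurable_F_mono[OF _ Theta_adapted]) auto
    show "Measurable.pred (F (n - 1)) (\<lambda>\<omega>. norm (\<Theta> l \<omega>) ^ 2 < R)" by measurable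
  qed
  finally show ?thesis .
next
  case False
  then have "up_to_entrance R n = (\<lambda>_. False)" by (auto simp: up_to_entrance_def)
  then show ?thesis by simp
qed

lemma up_to_entrance_pred [measurable]: "Measurable.pred M (up_to_entrance R n)"
  by (rule measurable_F_imp_M[OF up_to_entrance_pred_F])

lemma noise_sup_enn_measurable [measurable]: "noise_sup_enn R \<in> borel_measurable M"
proof -
  have "(\<lambda>\<omega>. if up_to_entrance R n \<omega> then ennreal (norm (D n \<omega>) ^ 2) else 0) \<in> borel_measurable M" for n
  proof (cases "1 \<le> n")
    case True
    have [measurable]: "D n \<in> borel_measurable M" by (rule D_measurable[OF True])
    show ?thesis by measurable
  qed (simp add: up_to_entrance_def)
  then show ?thesis unfolding noise_sup_enn_def by measurable
qed

lemma noise_sup_measurable [measurable]: "noise_sup R \<in> borel_measurable M"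
  unfolding noise_sup_def by measurable

lemma noise_sup_nonneg: "0 \<le> noise_sup R \<omega>"
  by (simp add: noise_sup_def)

lemma up_to_entrance_le_entrance_time: "up_to_entrance R n \<omega> \<Longrightarrow> enat n \<le> entrance_time \<Theta> R \<omega>"
  unfolding entrance_time_def up_to_entrance_def
  by (intro INF_greatest) (auto simp: not_less[symmetric])

lemma nn_integral_noise_sup_enn_finite: "(\<integral>\<^sup>+\<omega>. noise_sup_enn R \<omega> \<partial>M) < \<infinity>"
proof -
  have "(\<integral>\<^sup>+\<omega>. noise_sup_enn R \<omega> \<partial>M) \<le> (\<integral>\<^sup>+ \<omega>. (SUP n\<in>{n. n \<ge> 1 \<and> enat n \<le> entrance_time \<Theta> R \<omega>}.
        ennreal (norm (D n \<omega>) ^ 2)) \<partial>M)"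
    unfolding noise_sup_enn_def
    using up_to_entrance_le_entrance_time
    by (intro nn_integral_mono SUP_least) (auto simp: up_to_entrance_def intro: SUP_upper)
  also have "\<dots> < \<infinity>" by (rule D_sup_int)
  finally show ?thesis .
qed

lemma AE_noise_sup_enn_finite: "AE \<omega> in M. noise_sup_enn R \<omega> \<noteq> \<infinity>"
  using nn_integral_noise_sup_enn_finite[of R] by (intro nn_integral_PInf_AE) auto

lemma integrable_noise_sup: "integrable M (noise_sup R)"
proof (rule integrableI_bounded)
  have "(\<integral>\<^sup>+\<omega>. ennreal (norm (noise_sup R \<omega>)) \<partial>M) \<le> (\<integral>\<^sup>+\<omega>. noise_sup_enn R \<omega> \<partial>M)"
    unfolding noise_sup_def by (intro nn_integral_mono) (simp add: ennreal_enn2real_if)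
  then show "(\<integral>\<^sup>+\<omega>. ennreal (norm (noise_sup R \<omega>)) \<partial>M) < \<infinity>"
    using nn_integral_noise_sup_enn_finite[of R] by simp
qed simp

lemma norm_D_sq_le_noise_sup:
  assumes "up_to_entrance R n \<omega>" "noise_sup_enn R \<omega> \<noteq> \<infinity>"
  shows "norm (D n \<omega>) ^ 2 \<le> noise_sup R \<omega>"
proof -
  have "ennreal (norm (D n \<omega>) ^ 2) \<le> noise_sup_enn R \<omega>"
    unfolding noise_sup_enn_def using assms(1) by (intro SUP_upper2[of n]) auto
  then have "enn2real (ennreal (norm (D n \<omega>) ^ 2)) \<le> noise_sup R \<omega>"
    unfolding noise_sup_def using assms(2) by (intro enn2real_mono) (auto simp: less_top)
  then show ?thesis by simp
qed

definition confined :: "real \<Rightarrow> 'a set" where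
  "confined R = {\<omega>\<in>space M. \<forall>n. norm (\<Theta> n \<omega>) ^ 2 < R}"

definition bounded_paths :: "'a set" where
  "bounded_paths = {\<omega>\<in>space M. bdd_above ((\<lambda>n. norm (\<Theta> n \<omega>)) ` {1..})}"

lemma bounded_paths_eq:
  "bounded_paths = {\<omega>\<in>space M. \<exists>B::nat. \<forall>n\<ge>1. norm (\<Theta> n \<omega>) \<le> real B}"
proof -
  have "bdd_above ((\<lambda>n. norm (\<Theta> n \<omega>)) ` {1..}) \<longleftrightarrow> (\<exists>B::nat. \<forall>n\<ge>1. norm (\<Theta> n \<omega>) \<le> real B)" for \<omega>
  proof
    assume "bdd_above ((\<lambda>n. norm (\<Theta> n \<omega>)) ` {1..})"
    then obtain C where "\<And>n. 1 \<le> n \<Longrightarrow> norm (\<Theta> n \<omega>) \<le> C" by (auto simp: bdd_above_def)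
    then show "\<exists>B::nat. \<forall>n\<ge>1. norm (\<Theta> n \<omega>) \<le> real B"
      by (intro exI[of _ "nat \<lceil>C\<rceil>"]) (meson order_trans real_nat_ceiling_ge)
  qed (auto simp: bdd_above_def)
  then show ?thesis unfolding bounded_paths_def by auto
qed

lemma bounded_paths_sets [measurable]: "bounded_paths \<in> sets M"
  unfolding bounded_paths_eq by measurable

lemma confined_sets [measurable]: "confined R \<in> sets M"
  unfolding confined_def by measurable

lemma measure_bounded_paths_diff_confined:
  "(\<lambda>r::nat. measure M (bounded_paths - confined r)) \<longlonglongrightarrow> 0"
proof -
  define A where "A r = bounded_paths - confined (real r)" for r
  have "decseq A"
    unfolding A_def decseq_def confined_def by (auto, meson less_le_trans of_nat_le_iff)
  moreover have "range A \<subseteq> sets M" by (auto simp: A_def)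
  ultimately have "(\<lambda>r. measure M (A r)) \<longlonglongrightarrow> measure M (\<Inter>r. A r)"
    by (intro finite_Lim_measure_decseq)
  moreover have "(\<Inter>r. A r) = {}"
    unfolding A_def
  proof safe
    fix \<omega> assume \<omega>: "\<omega> \<in> (\<Inter>r::nat. bounded_paths - confined r)"
    then obtain B :: nat where B: "\<And>n. 1 \<le> n \<Longrightarrow> norm (\<Theta> n \<omega>) \<le> real B" and "\<omega> \<in> space M"
      unfolding bounded_paths_eq by auto
    obtain r :: nat where r: "max (real B ^ 2) (norm (\<Theta> 0 \<omega>) ^ 2) < real r"
      using reals_Archimedean2 by blast
    have "norm (\<Theta> n \<omega>) ^ 2 < real r" for n
    proof (cases "n = 0")
      case False
      then have "norm (\<Theta> n \<omega>) ^ 2 \<le> real B ^ 2" using B[of n] by (intro power_mono) auto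
      then show ?thesis using r by linarith
    qed (use r in auto)
    then have "\<omega> \<in> confined (real r)" using \<open>\<omega> \<in> space M\<close> by (simp add: confined_def)
    then show "\<omega> \<in> {}" using \<omega> by auto
  qed
  ultimately show ?thesis unfolding A_def by (metis measure_empty)
qed

lemma g_bounded_below_level: "\<exists>G\<ge>0. \<forall>\<theta>. norm \<theta> ^ 2 < R \<longrightarrow> norm (g \<theta>) \<le> G"
proof -
  have "bounded (g ` cball 0 (sqrt \<bar>R\<bar>))"
    by (rule locally_bounded_imp_bounded_image_compact[OF g_locbdd compact_cball])
  then obtain G where G: "\<And>\<theta>. \<theta> \<in> cball 0 (sqrt \<bar>R\<bar>) \<Longrightarrow> norm (g \<theta>) \<le> G"
    unfolding bounded_iff by blast
  have "norm (g \<theta>) \<le> max G 0" if "norm \<theta> ^ 2 < R" for \<theta>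
  proof -
    have "norm \<theta> \<le> sqrt \<bar>R\<bar>" using that by (intro real_le_rsqrt) auto
    then show ?thesis using G[of \<theta>] by simp
  qed
  then show ?thesis by (intro exI[of _ "max G 0"]) auto
qed

lemma exists_confinement_level:
  assumes "0 < e"
  shows "\<exists>R\<ge>1. measure M (bounded_paths - confined R) \<le> e"
proof -
  obtain r0 where "\<And>r. r0 \<le> r \<Longrightarrow> measure M (bounded_paths - confined (real r)) < e"
    using order_tendstoD(2)[OF measure_bounded_paths_diff_confined assms]
    by (auto simp: eventually_sequentially)
  then show ?thesis by (intro exI[of _ "real (max r0 1)"]) (auto intro: less_imp_le)
qed

lemma exists_noise_cap:
  assumes "0 < e"
  shows "\<exists>K>0. measure M {\<omega>\<in>space M. K \<le> noise_sup R \<omega>} \<le> e"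
proof -
  define S where "S = (\<integral>\<omega>. noise_sup R \<omega> \<partial>M)"
  have "0 \<le> S" unfolding S_def by (intro integral_nonneg_AE) (simp add: noise_sup_nonneg)
  define K where "K = S / e + 1"
  have "0 < K" using \<open>0 \<le> S\<close> assms by (simp add: K_def add_nonneg_pos)
  have "measure M {\<omega>\<in>space M. K \<le> noise_sup R \<omega>} \<le> S / K"
    unfolding S_def using integrable_noise_sup noise_sup_nonneg \<open>0 < K\<close>
    by (intro integral_Markov_inequality_measure[where A = "space M"]) auto
  also have "\<dots> \<le> e"
    using \<open>0 < K\<close> assms by (simp add: K_def divide_le_eq field_simps)
  finally show ?thesis using \<open>0 < K\<close> by blast
qed

section \<open>The martingale part\<close>

text \<open>Restricting the increments to steps before the entrance time and with step size at most
  \<open>\<eta>\<close> makes them square integrable, with second moments of order \<open>\<eta>\<close>.\<close>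

definition counted :: "real \<Rightarrow> real \<Rightarrow> real \<Rightarrow> real \<Rightarrow> nat \<Rightarrow> 'a \<Rightarrow> bool" where
  "counted R \<eta> a b i \<omega> \<longleftrightarrow> up_to_entrance R i \<omega> \<and> \<gamma> i \<omega> \<le> \<eta>
    \<and> a \<le> elapsed_time (i - 1) \<omega> \<and> elapsed_time (i - 1) \<omega> < b"

definition mart_incr :: "real \<Rightarrow> real \<Rightarrow> real \<Rightarrow> real \<Rightarrow> nat \<Rightarrow> 'a \<Rightarrow> real" where
  "mart_incr R \<eta> a b i \<omega> =
    (if counted R \<eta> a b i \<omega> then \<gamma> i \<omega> * inner (\<Theta> (i - 1) \<omega>) (D i \<omega>) else 0)"

definition incr_bound :: "real \<Rightarrow> real \<Rightarrow> real \<Rightarrow> real \<Rightarrow> nat \<Rightarrow> 'a \<Rightarrow> real" where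
  "incr_bound R \<eta> a b i \<omega> =
    (if counted R \<eta> a b i \<omega> then \<gamma> i \<omega> * (norm (\<Theta> (i - 1) \<omega>) * norm (D i \<omega>)) else 0)"

lemma countedD:
  assumes "counted R \<eta> a b i \<omega>" "\<omega> \<in> space M"
  shows "1 \<le> i" "0 \<le> \<gamma> i \<omega>" "\<gamma> i \<omega> \<le> \<eta>" "norm (\<Theta> (i - 1) \<omega>) ^ 2 < R"
    "up_to_entrance R i \<omega>" "a \<le> elapsed_time (i - 1) \<omega>" "elapsed_time (i - 1) \<omega> < b"
  using assms gamma_nonneg by (auto simp: counted_def up_to_entrance_def)

lemma counted_pred_F: "Measurable.pred (F (i - 1)) (counted R \<eta> a b i)"
proof (cases "1 \<le> i")
  case True
  have [measurable]: "Measurable.pred (F (i - 1)) (up_to_entrance R i)"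
    "\<gamma> i \<in> borel_measurable (F (i - 1))" "elapsed_time (i - 1) \<in> borel_measurable (F (i - 1))"
    using up_to_entrance_pred_F gamma_meas elapsed_time_measurable_F True by simp_all
  show ?thesis unfolding counted_def by measurable
next
  case False
  then have "counted R \<eta> a b i = (\<lambda>_. False)" by (auto simp: counted_def up_to_entrance_def)
  then show ?thesis by simp
qed

lemma counted_pred [measurable]: "Measurable.pred M (counted R \<eta> a b i)"
  by (rule measurable_F_imp_M[OF counted_pred_F])

lemma mart_incr_measurable_F: "mart_incr R \<eta> a b i \<in> borel_measurable (F i)"
proof (cases "1 \<le> i")
  case True
  have [measurable]: "Measurable.pred (F i) (counted R \<eta> a b i)"
    "\<gamma> i \<in> borel_measurable (F i)" "\<Theta> (i - 1) \<in> borel_measurable (F i)"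
    "\<Theta> i \<in> borel_measurable (F i)" "g \<in> borel_measurable borel"
    using measurable_F_mono[OF _ counted_pred_F] measurable_F_mono[OF _ gamma_meas[OF True]]
      measurable_F_mono[OF _ Theta_adapted] Theta_adapted g_meas
    by auto
  \<comment> \<open>\<open>D i\<close> is not assumed to be adapted; it is recovered from the recursion.\<close>
  have "mart_incr R \<eta> a b i \<omega> = (if counted R \<eta> a b i \<omega> then
      inner (\<Theta> (i - 1) \<omega>) (\<Theta> i \<omega> - \<Theta> (i - 1) \<omega> - \<gamma> i \<omega> *\<^sub>R g (\<Theta> (i - 1) \<omega>)) else 0)"
    if "\<omega> \<in> space (F i)" for \<omega>
    using Theta_rec[OF True, of \<omega>] that by (simp add: mart_incr_def inner_scaleR_right space_F)
  then show ?thesis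
    by (subst measurable_cong) (assumption, measurable)
next
  case False
  then have "mart_incr R \<eta> a b i = (\<lambda>_. 0)"
    by (auto simp: mart_incr_def counted_def up_to_entrance_def)
  then show ?thesis by simp
qed

lemma mart_incr_measurable [measurable]: "mart_incr R \<eta> a b i \<in> borel_measurable M"
  by (rule measurable_F_imp_M[OF mart_incr_measurable_F])

lemma abs_mart_incr_le: "\<bar>mart_incr R \<eta> a b i \<omega>\<bar> \<le> incr_bound R \<eta> a b i \<omega>"
  if "\<omega> \<in> space M"
proof (cases "counted R \<eta> a b i \<omega>")
  case True
  then show ?thesis
    using mult_left_mono[OF Cauchy_Schwarz_ineq2 countedD(2)[OF True that]]
      countedD(2)[OF True that]
    by (simp add: mart_incr_def incr_bound_def abs_mult)
qed (simp add: mart_incr_def incr_bound_def)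

lemma incr_bound_nonneg: "\<omega> \<in> space M \<Longrightarrow> 0 \<le> incr_bound R \<eta> a b i \<omega>"
  using countedD(2) by (auto simp: incr_bound_def)

lemma incr_bound_mult_le:
  assumes \<omega>: "\<omega> \<in> space M" and finite: "noise_sup_enn R \<omega> \<noteq> \<infinity>" and "0 \<le> R"
  shows "incr_bound R \<eta> a b i \<omega> * incr_bound R \<eta> a b j \<omega> \<le> \<eta>\<^sup>2 * R * noise_sup R \<omega>"
proof (cases "counted R \<eta> a b i \<omega> \<and> counted R \<eta> a b j \<omega>")
  case True
  note ci = countedD[OF conjunct1[OF True] \<omega>] and cj = countedD[OF conjunct2[OF True] \<omega>]
  have "\<gamma> i \<omega> * \<gamma> j \<omega> \<le> \<eta>\<^sup>2"
    using ci cj by (simp add: power2_eq_square mult_mono)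
  moreover have "norm (\<Theta> (i - 1) \<omega>) * norm (\<Theta> (j - 1) \<omega>) \<le> R"
    using ci(4) cj(4) by (intro mult_le_if_squares_le) auto
  moreover have "norm (D i \<omega>) * norm (D j \<omega>) \<le> noise_sup R \<omega>"
    using norm_D_sq_le_noise_sup[OF ci(5) finite] norm_D_sq_le_noise_sup[OF cj(5) finite]
    by (intro mult_le_if_squares_le) auto
  ultimately have "(\<gamma> i \<omega> * \<gamma> j \<omega>) * (norm (\<Theta> (i - 1) \<omega>) * norm (\<Theta> (j - 1) \<omega>))
      * (norm (D i \<omega>) * norm (D j \<omega>)) \<le> \<eta>\<^sup>2 * R * noise_sup R \<omega>"
    using ci(2) cj(2) \<open>0 \<le> R\<close> by (intro mult_mono) auto
  then show ?thesis using True by (simp add: incr_bound_def mult_ac)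
qed (use assms noise_sup_nonneg in \<open>auto simp: incr_bound_def\<close>)

lemma integrable_if_abs_le_incr_bound_mult:
  assumes [measurable]: "h \<in> borel_measurable M" and "0 \<le> R"
    and "AE \<omega> in M. \<bar>h \<omega>\<bar> \<le> incr_bound R \<eta> a b i \<omega> * incr_bound R \<eta> a b j \<omega>"
  shows "integrable M h"
proof (rule Bochner_Integration.integrable_bound)
  show "integrable M (\<lambda>\<omega>. \<eta>\<^sup>2 * R * noise_sup R \<omega>)" using integrable_noise_sup by simp
  show "AE \<omega> in M. norm (h \<omega>) \<le> norm (\<eta>\<^sup>2 * R * noise_sup R \<omega>)"
    using assms(3) AE_noise_sup_enn_finite[of R] AE_space
  proof eventually_elim
    case (elim \<omega>)
    then show ?case using incr_bound_mult_le[OF elim(3,2) \<open>0 \<le> R\<close>, of \<eta> a b i j] by simp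
  qed
qed simp

lemma integrable_mart_incr_mult:
  "0 \<le> R \<Longrightarrow> integrable M (\<lambda>\<omega>. mart_incr R \<eta> a b i \<omega> * mart_incr R \<eta> a b j \<omega>)"
  by (rule integrable_if_abs_le_incr_bound_mult[of _ R \<eta> a b i j])
    (auto simp: abs_mult intro!: AE_I2 mult_mono abs_mart_incr_le incr_bound_nonneg)

lemma integrable_mart_incr_mult_component:
  assumes "0 \<le> R" "1 \<le> j" and [measurable]: "A \<in> sets M"
  shows "integrable M (\<lambda>\<omega>. mart_incr R \<eta> a b i \<omega> * indicator A \<omega>
    * (if counted R \<eta> a b j \<omega> then \<gamma> j \<omega> else 0) * (\<Theta> (j - 1) \<omega> $ k) * (D j \<omega> $ k))"
proof (rule integrable_if_abs_le_incr_bound_mult[of _ R \<eta> a b i j])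
  have [measurable]: "\<gamma> j \<in> borel_measurable M" "D j \<in> borel_measurable M"
    using gamma_measurable D_measurable \<open>1 \<le> j\<close> by auto
  show "(\<lambda>\<omega>. mart_incr R \<eta> a b i \<omega> * indicator A \<omega> * (if counted R \<eta> a b j \<omega> then \<gamma> j \<omega> else 0)
      * (\<Theta> (j - 1) \<omega> $ k) * (D j \<omega> $ k)) \<in> borel_measurable M"
    by measurable
  show "AE \<omega> in M. \<bar>mart_incr R \<eta> a b i \<omega> * indicator A \<omega> * (if counted R \<eta> a b j \<omega> then \<gamma> j \<omega> else 0)
      * (\<Theta> (j - 1) \<omega> $ k) * (D j \<omega> $ k)\<bar> \<le> incr_bound R \<eta> a b i \<omega> * incr_bound R \<eta> a b j \<omega>"
  proof (rule AE_I2)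
    fix \<omega> assume \<omega>: "\<omega> \<in> space M"
    have "\<bar>(if counted R \<eta> a b j \<omega> then \<gamma> j \<omega> else 0) * (\<Theta> (j - 1) \<omega> $ k) * (D j \<omega> $ k)\<bar>
        \<le> incr_bound R \<eta> a b j \<omega>"
    proof (cases "counted R \<eta> a b j \<omega>")
      case True
      have "\<bar>\<Theta> (j - 1) \<omega> $ k\<bar> * \<bar>D j \<omega> $ k\<bar> \<le> norm (\<Theta> (j - 1) \<omega>) * norm (D j \<omega>)"
        by (intro mult_mono component_le_norm_cart) auto
      then show ?thesis
        using True countedD(2)[OF True \<omega>]
        by (simp add: incr_bound_def abs_mult mult.assoc mult_left_mono)
    qed (simp add: incr_bound_def)
    then show "\<bar>mart_incr R \<eta> a b i \<omega> * indicator A \<omega> * (if counted R \<eta> a b j \<omega> then \<gamma> j \<omega> else 0)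
        * (\<Theta> (j - 1) \<omega> $ k) * (D j \<omega> $ k)\<bar> \<le> incr_bound R \<eta> a b i \<omega> * incr_bound R \<eta> a b j \<omega>"
      using abs_mart_incr_le[OF \<omega>, of R \<eta> a b i] incr_bound_nonneg[OF \<omega>]
      by (auto simp: abs_mult indicator_def mult.assoc intro!: mult_mono)
  qed
qed fact

lemma mart_incr_orthogonal:
  assumes "1 \<le> i" "i < j" and A: "A \<in> sets (F (j - 1))" and "0 \<le> R"
  shows "(\<integral>\<omega>. mart_incr R \<eta> a b i \<omega> * mart_incr R \<eta> a b j \<omega> * indicator A \<omega> \<partial>M) = 0"
proof -
  have "1 \<le> j" using assms by simp
  define f where "f k \<omega> = mart_incr R \<eta> a b i \<omega> * indicator A \<omega>
    * (if counted R \<eta> a b j \<omega> then \<gamma> j \<omega> else 0) * (\<Theta> (j - 1) \<omega> $ k)" for k \<omega>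
  have split: "mart_incr R \<eta> a b i \<omega> * mart_incr R \<eta> a b j \<omega> * indicator A \<omega>
      = (\<Sum>k\<in>UNIV. f k \<omega> * (D j \<omega> $ k))" for \<omega>
    by (cases "counted R \<eta> a b j \<omega>")
      (simp_all add: f_def mart_incr_def[of R \<eta> a b j] inner_vec_def sum_distrib_left mult_ac)
  have f_F: "f k \<in> borel_measurable (F (j - 1))" for k
  proof -
    have [measurable]: "mart_incr R \<eta> a b i \<in> borel_measurable (F (j - 1))"
      "Measurable.pred (F (j - 1)) (counted R \<eta> a b j)" "\<gamma> j \<in> borel_measurable (F (j - 1))"
      "\<Theta> (j - 1) \<in> borel_measurable (F (j - 1))" "A \<in> sets (F (j - 1))"
      using measurable_F_mono[OF _ mart_incr_measurable_F] assms counted_pred_F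
        gamma_meas[OF \<open>1 \<le> j\<close>] Theta_adapted
      by auto
    show ?thesis unfolding f_def by measurable
  qed
  have integrable_k: "integrable M (\<lambda>\<omega>. f k \<omega> * (D j \<omega> $ k))" for k
    unfolding f_def using A sets_F_subset
    by (intro integrable_mart_incr_mult_component \<open>0 \<le> R\<close> \<open>1 \<le> j\<close>) auto
  have [measurable]: "D j \<in> borel_measurable M" using D_measurable[OF \<open>1 \<le> j\<close>] .
  have "(\<integral>\<omega>. f k \<omega> * (D j \<omega> $ k) \<partial>M) = 0" for k
    using D_mart[OF \<open>1 \<le> j\<close>] f_F integrable_k
    by (intro integral_mult_eq_0_if_real_cond_exp_eq_0) auto
  then show ?thesis
    unfolding split by (subst Bochner_Integration.integral_sum) (simp_all add: integrable_k)
qed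

lemma sum_counted_gamma_le:
  assumes \<omega>: "\<omega> \<in> space M" and "a \<le> b" "0 \<le> \<eta>"
  shows "(\<Sum>i=1..n. if counted R \<eta> a b i \<omega> then \<gamma> i \<omega> else 0) \<le> b - a + \<eta>"
proof -
  \<comment> \<open>Counted steps start at elapsed time at least \<open>a\<close>; the last one starts before \<open>b\<close>
    and has length at most \<open>\<eta>\<close>.\<close>
  have "(\<Sum>i=1..n. if counted R \<eta> a b i \<omega> then \<gamma> i \<omega> else 0) \<le> max 0 (elapsed_time n \<omega> - a)
    \<and> (\<Sum>i=1..n. if counted R \<eta> a b i \<omega> then \<gamma> i \<omega> else 0) \<le> b - a + \<eta>"
  proof (induction n)
    case 0
    then show ?case using assms by simp
  next
    case (Suc n)
    show ?case
    proof (cases "counted R \<eta> a b (Suc n) \<omega>")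
      case True
      then have "a \<le> elapsed_time n \<omega>" "elapsed_time n \<omega> < b" "\<gamma> (Suc n) \<omega> \<le> \<eta>"
        by (auto simp: counted_def)
      then show ?thesis using Suc.IH True by (auto simp: elapsed_time_Suc max_def)
    next
      case False
      then show ?thesis
        using Suc.IH elapsed_time_mono[OF \<omega>, of n "Suc n"] by auto
    qed
  qed
  then show ?thesis by blast
qed

lemma mart_incr_sq_le:
  assumes \<omega>: "\<omega> \<in> space M" and finite: "noise_sup_enn R \<omega> \<noteq> \<infinity>" and "0 \<le> R"
  shows "mart_incr R \<eta> a b i \<omega> ^ 2
    \<le> \<eta> * R * noise_sup R \<omega> * (if counted R \<eta> a b i \<omega> then \<gamma> i \<omega> else 0)"
proof (cases "counted R \<eta> a b i \<omega>")
  case True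
  note ci = countedD[OF True \<omega>]
  have "mart_incr R \<eta> a b i \<omega> ^ 2 \<le> \<gamma> i \<omega> ^ 2 * (norm (\<Theta> (i - 1) \<omega>) ^ 2 * norm (D i \<omega>) ^ 2)"
    using True power_mono[OF Cauchy_Schwarz_ineq2[of "\<Theta> (i - 1) \<omega>" "D i \<omega>"] abs_ge_zero, of 2]
    by (simp add: mart_incr_def power_mult_distrib mult_left_mono)
  also have "\<dots> \<le> (\<gamma> i \<omega> * \<eta>) * (R * noise_sup R \<omega>)"
    using ci norm_D_sq_le_noise_sup[OF ci(5) finite] \<open>0 \<le> R\<close>
    by (intro mult_mono) (auto simp: power2_eq_square intro: mult_left_mono)
  finally show ?thesis using True by (simp add: mult_ac)
qed (simp add: mart_incr_def)

lemma sum_integral_mart_incr_sq_le: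
  assumes "a \<le> b" "0 \<le> \<eta>" "0 \<le> R"
  shows "(\<Sum>i=1..n. \<integral>\<omega>. mart_incr R \<eta> a b i \<omega> ^ 2 \<partial>M)
    \<le> \<eta> * R * (b - a + \<eta>) * (\<integral>\<omega>. noise_sup R \<omega> \<partial>M)"
proof -
  have integrable_sq: "integrable M (\<lambda>\<omega>. mart_incr R \<eta> a b i \<omega> ^ 2)" for i
    using integrable_mart_incr_mult[OF \<open>0 \<le> R\<close>, of \<eta> a b i i] by (simp add: power2_eq_square)
  have "(\<Sum>i=1..n. \<integral>\<omega>. mart_incr R \<eta> a b i \<omega> ^ 2 \<partial>M)
      = (\<integral>\<omega>. (\<Sum>i=1..n. mart_incr R \<eta> a b i \<omega> ^ 2) \<partial>M)"
    by (intro Bochner_Integration.integral_sum[symmetric] integrable_sq)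
  also have "\<dots> \<le> (\<integral>\<omega>. \<eta> * R * (b - a + \<eta>) * noise_sup R \<omega> \<partial>M)"
  proof (rule integral_mono_AE)
    show "AE \<omega> in M. (\<Sum>i=1..n. mart_incr R \<eta> a b i \<omega> ^ 2) \<le> \<eta> * R * (b - a + \<eta>) * noise_sup R \<omega>"
      using AE_noise_sup_enn_finite[of R] AE_space
    proof eventually_elim
      case (elim \<omega>)
      have "(\<Sum>i=1..n. mart_incr R \<eta> a b i \<omega> ^ 2)
          \<le> \<eta> * R * noise_sup R \<omega> * (\<Sum>i=1..n. if counted R \<eta> a b i \<omega> then \<gamma> i \<omega> else 0)"
        unfolding sum_distrib_left using elim \<open>0 \<le> R\<close> by (intro sum_mono mart_incr_sq_le)
      also have "\<dots> \<le> \<eta> * R * noise_sup R \<omega> * (b - a + \<eta>)"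
        using sum_counted_gamma_le[OF elim(2) assms(1,2)] assms noise_sup_nonneg
        by (intro mult_left_mono) auto
      finally show ?case by (simp add: mult_ac)
    qed
  qed (use integrable_sq integrable_noise_sup in auto)
  finally show ?thesis by simp
qed

lemma prob_mart_deviation_le:
  assumes "0 < r" "a \<le> b" "0 \<le> \<eta>" "0 \<le> R"
  shows "r\<^sup>2 * measure M {\<omega>\<in>space M. \<exists>j. r \<le> \<bar>\<Sum>i=1..j. mart_incr R \<eta> a b i \<omega>\<bar>}
    \<le> \<eta> * R * (b - a + \<eta>) * (\<integral>\<omega>. noise_sup R \<omega> \<partial>M)"
proof -
  interpret orthogonal_increments M F "mart_incr R \<eta> a b"
    using mart_incr_measurable_F integrable_mart_incr_mult mart_incr_orthogonal \<open>0 \<le> R\<close>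
    by unfold_locales auto
  show ?thesis
    using kolmogorov_maximal_inequality_sup[OF \<open>0 < r\<close> sum_integral_mart_incr_sq_le[OF assms(2-4)]]
    by (simp add: partial_sum_def)
qed

section \<open>Pathwise contraction\<close>

lemma norm_Theta_sq_step_le:
  assumes "\<omega> \<in> space M" "1 \<le> j"
    and "norm (g (\<Theta> (j - 1) \<omega>)) \<le> G" and "norm (D j \<omega>) ^ 2 \<le> K"
  shows "norm (\<Theta> j \<omega>) ^ 2 \<le> (1 - 2 * c * \<gamma> j \<omega>) * norm (\<Theta> (j - 1) \<omega>) ^ 2
    + 2 * (\<gamma> j \<omega> * inner (\<Theta> (j - 1) \<omega>) (D j \<omega>)) + 2 * \<gamma> j \<omega> ^ 2 * (G^2 + K)"
  using norm_sq_coercive_step_le[OF g_coercive assms(3,4) gamma_nonneg[OF assms(2,1)]]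
    Theta_rec[OF assms(2,1)]
  by simp

lemma counted_after_time_index:
  assumes \<omega>: "\<omega> \<in> space M" and "\<omega> \<in> confined R" and "0 < a"
    and step_small: "\<gamma> (time_index \<gamma> a \<omega>) \<omega> \<le> \<eta>"
    and j: "time_index \<gamma> a \<omega> < j" "j \<le> time_index \<gamma> b \<omega>"
  shows "counted R \<eta> a b j \<omega>"
proof -
  have "1 \<le> time_index \<gamma> a \<omega>" using time_index_pos[OF \<open>0 < a\<close> \<omega>] .
  then have "\<gamma> j \<omega> \<le> \<eta>" using gamma_antimono[OF \<omega>, of _ j] step_small j by force
  moreover have "a \<le> elapsed_time (j - 1) \<omega>"
    using le_elapsed_time_time_index[OF \<omega>, of a]
      elapsed_time_mono[OF \<omega>, of "time_index \<gamma> a \<omega>" "j - 1"] j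
    by linarith
  moreover have "elapsed_time (j - 1) \<omega> < b"
    using j by (intro elapsed_time_less_if_less_time_index) linarith
  ultimately show ?thesis
    using assms(2) j by (auto simp: counted_def up_to_entrance_def confined_def)
qed

lemma mart_incr_up_to_time_index:
  assumes "i \<le> time_index \<gamma> a \<omega>"
  shows "mart_incr R \<eta> a b i \<omega> = 0"
proof -
  have "elapsed_time (i - 1) \<omega> < a" if "1 \<le> i"
    using that assms by (intro elapsed_time_less_if_less_time_index) linarith
  then show ?thesis by (auto simp: mart_incr_def counted_def up_to_entrance_def)
qed

lemma elapsed_time_window_bounds:
  assumes \<omega>: "\<omega> \<in> space M" and window: "0 < a" "a \<le> t" "t \<le> b"
    and step_small: "\<gamma> (time_index \<gamma> a \<omega>) \<omega> \<le> \<eta>"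
    and m: "time_index \<gamma> t \<omega> \<le> m" "m \<le> time_index \<gamma> b \<omega>"
  shows "t - a - \<eta> \<le> (\<Sum>i\<in>{time_index \<gamma> a \<omega><..m}. \<gamma> i \<omega>)"
    and "(\<Sum>i\<in>{time_index \<gamma> a \<omega><..m}. \<gamma> i \<omega>) \<le> b - a + \<eta>"
proof -
  define k where "k = time_index \<gamma> a \<omega>"
  have "1 \<le> k" using time_index_pos[OF window(1) \<omega>] by (simp add: k_def)
  have "k \<le> m" using time_index_mono[OF \<omega> window(2)] m(1) by (simp add: k_def)
  have "a \<le> elapsed_time k \<omega>" "elapsed_time k \<omega> < a + \<eta>"
    using le_elapsed_time_time_index[OF \<omega>] elapsed_time_time_index_less[OF window(1) \<omega>] step_small
    by (force simp: k_def)+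
  moreover have "t \<le> elapsed_time m \<omega>"
    using le_elapsed_time_time_index[OF \<omega>, of t] elapsed_time_mono[OF \<omega> m(1)] by linarith
  moreover have "elapsed_time m \<omega> < b + \<eta>"
    using elapsed_time_mono[OF \<omega> m(2)] elapsed_time_time_index_less[of b \<omega>] window \<omega>
      gamma_antimono[OF \<omega> \<open>1 \<le> k\<close>, of "time_index \<gamma> b \<omega>"] \<open>k \<le> m\<close> m(2) step_small
    by (force simp: k_def)
  ultimately show "t - a - \<eta> \<le> (\<Sum>i\<in>{time_index \<gamma> a \<omega><..m}. \<gamma> i \<omega>)"
    and "(\<Sum>i\<in>{time_index \<gamma> a \<omega><..m}. \<gamma> i \<omega>) \<le> b - a + \<eta>"
    using elapsed_time_diff[OF \<open>k \<le> m\<close>, of \<omega>] by (simp_all add: k_def)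
qed

lemma norm_Theta_sq_window_le:
  assumes \<omega>: "\<omega> \<in> space M" and conf: "\<omega> \<in> confined R"
    and G: "\<And>\<theta>. norm \<theta> ^ 2 < R \<Longrightarrow> norm (g \<theta>) \<le> G"
    and K: "\<And>n. up_to_entrance R n \<omega> \<Longrightarrow> norm (D n \<omega>) ^ 2 \<le> K"
    and "\<eta> \<le> 1"
    and window: "0 < a" "a \<le> t" "t \<le> b"
    and step_small: "\<gamma> (time_index \<gamma> a \<omega>) \<omega> \<le> \<eta>"
    and mart_small: "\<And>j. \<bar>\<Sum>i=1..j. mart_incr R \<eta> a b i \<omega>\<bar> \<le> \<rho>"
    and error_small: "2 * \<eta> * (G^2 + K) * (b - a + 1) \<le> \<rho>"
    and m: "time_index \<gamma> t \<omega> \<le> m" "m \<le> time_index \<gamma> b \<omega>"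
  shows "norm (\<Theta> m \<omega>) ^ 2 \<le> R * exp (- 2 * c * (t - a - \<eta>)) + 5 * \<rho>"
proof -
  define k where "k = time_index \<gamma> a \<omega>"
  note elapsed = elapsed_time_window_bounds[OF \<omega> window step_small m, folded k_def]
  have "1 \<le> k" using time_index_pos[OF window(1) \<omega>] by (simp add: k_def)
  then have "0 \<le> \<eta>" using gamma_nonneg[OF _ \<omega>, of k] step_small by (simp add: k_def)
  have "k \<le> m" using time_index_mono[OF \<omega> window(2)] m(1) by (simp add: k_def)
  have conf': "norm (\<Theta> n \<omega>) ^ 2 < R" for n using conf by (simp add: confined_def)
  have counted: "counted R \<eta> a b j \<omega>" if "k < j" "j \<le> m" for j
    using that m(2) by (intro counted_after_time_index[OF \<omega> conf window(1) step_small]) (auto simp: k_def)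
  note counted_j = countedD[OF counted \<omega>]
  have "norm (D 1 \<omega>) ^ 2 \<le> K" using K conf' by (simp add: up_to_entrance_def)
  then have "0 \<le> K" by (meson order_trans zero_le_power2)
  have "norm (\<Theta> m \<omega>) ^ 2 \<le> R * exp (- (\<Sum>i\<in>{k<..m}. 2 * c * \<gamma> i \<omega>)) + 5 * \<rho>"
  proof (rule perturbed_contraction_bound[where \<Delta> = "\<lambda>j. mart_incr R \<eta> a b j \<omega>"
        and e = "\<lambda>j. 2 * \<gamma> j \<omega> ^ 2 * (G^2 + K)"])
    fix j assume "k < j" "j \<le> m"
    note cj = counted_j[OF this]
    show "norm (\<Theta> j \<omega>) ^ 2 \<le> (1 - 2 * c * \<gamma> j \<omega>) * norm (\<Theta> (j - 1) \<omega>) ^ 2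
        + 2 * mart_incr R \<eta> a b j \<omega> + 2 * \<gamma> j \<omega> ^ 2 * (G^2 + K)"
      using norm_Theta_sq_step_le[OF \<omega> cj(1) G[OF conf'] K[OF cj(5)]] counted[OF \<open>k < j\<close> \<open>j \<le> m\<close>]
      by (simp add: mart_incr_def)
    show "0 \<le> 2 * c * \<gamma> j \<omega>" using cj(2) c_pos by simp
    show "0 \<le> 2 * \<gamma> j \<omega> ^ 2 * (G^2 + K)" using \<open>0 \<le> K\<close> by simp
  next
    fix j assume "k \<le> j" "j \<le> m"
    have "(\<Sum>i=1..j. mart_incr R \<eta> a b i \<omega>) = (\<Sum>i\<in>{k<..j}. mart_incr R \<eta> a b i \<omega>)"
      using \<open>k \<le> j\<close> mart_incr_up_to_time_index[of _ a \<omega>]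
      by (intro sum.mono_neutral_right) (auto simp: k_def)
    then show "\<bar>\<Sum>i\<in>{k<..j}. mart_incr R \<eta> a b i \<omega>\<bar> \<le> \<rho>" using mart_small[of j] by simp
  next
    have "(\<Sum>i\<in>{k<..m}. \<gamma> i \<omega> ^ 2) \<le> \<eta> * (\<Sum>i\<in>{k<..m}. \<gamma> i \<omega>)"
      using counted_j(2,3) by (intro sum_sq_le_mult_sum) auto
    also have "\<dots> \<le> \<eta> * (b - a + 1)"
      using elapsed(2) \<open>\<eta> \<le> 1\<close> \<open>0 \<le> \<eta>\<close> by (intro mult_left_mono) auto
    finally have "2 * (G^2 + K) * (\<Sum>i\<in>{k<..m}. \<gamma> i \<omega> ^ 2) \<le> 2 * (G^2 + K) * (\<eta> * (b - a + 1))"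
      using \<open>0 \<le> K\<close> by (intro mult_left_mono) auto
    moreover have "(\<Sum>i\<in>{k<..m}. 2 * \<gamma> i \<omega> ^ 2 * (G^2 + K)) = 2 * (G^2 + K) * (\<Sum>i\<in>{k<..m}. \<gamma> i \<omega> ^ 2)"
      unfolding sum_distrib_left by (intro sum.cong refl) (simp add: algebra_simps)
    moreover have "2 * (G^2 + K) * (\<eta> * (b - a + 1)) = 2 * \<eta> * (G^2 + K) * (b - a + 1)"
      by (simp add: mult_ac)
    ultimately show "(\<Sum>i\<in>{k<..m}. 2 * \<gamma> i \<omega> ^ 2 * (G^2 + K)) \<le> \<rho>"
      using error_small by linarith
  qed (use conf' less_imp_le \<open>k \<le> m\<close> in auto)
  also have "\<dots> \<le> R * exp (- 2 * c * (t - a - \<eta>)) + 5 * \<rho>"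
    using elapsed(1) c_pos less_imp_le[OF le_less_trans[OF zero_le_power2 conf'[of 0]]]
    by (intro add_right_mono mult_left_mono) (auto simp: sum_distrib_left[symmetric])
  finally show ?thesis .
qed

section \<open>Expectations over time windows\<close>

definition window_max :: "real \<Rightarrow> real \<Rightarrow> 'a \<Rightarrow> real" where
  "window_max s s' \<omega> = Max ((\<lambda>m. norm (\<Theta> m \<omega>)) ` {time_index \<gamma> s \<omega> .. time_index \<gamma> s' \<omega>})"

lemma window_max_measurable [measurable]: "window_max s s' \<in> borel_measurable M"
proof -
  have fixed: "(\<lambda>\<omega>. Max ((\<lambda>m. norm (\<Theta> m \<omega>)) ` {i..j})) \<in> borel_measurable M" for i j
    by (rule borel_measurable_Max) auto
  have "(\<lambda>\<omega>. Max ((\<lambda>m. norm (\<Theta> m \<omega>)) ` {i..time_index \<gamma> s' \<omega>})) \<in> borel_measurable M" for i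
    by (rule measurable_compose_countable[where f = "\<lambda>j \<omega>. Max ((\<lambda>m. norm (\<Theta> m \<omega>)) ` {i..j})",
          OF fixed time_index_measurable])
  then show ?thesis
    unfolding window_max_def
    by (rule measurable_compose_countable[where
          f = "\<lambda>i \<omega>. Max ((\<lambda>m. norm (\<Theta> m \<omega>)) ` {i..time_index \<gamma> s' \<omega>})", OF _ time_index_measurable])
qed

lemma norm_le_window_max:
  "m \<in> {time_index \<gamma> s \<omega> .. time_index \<gamma> s' \<omega>} \<Longrightarrow> norm (\<Theta> m \<omega>) \<le> window_max s s' \<omega>"
  unfolding window_max_def by (intro Max_ge) auto

lemma window_max_nonneg:
  assumes "\<omega> \<in> space M" "s \<le> s'"
  shows "0 \<le> window_max s s' \<omega>"
proof -
  have "norm (\<Theta> (time_index \<gamma> s \<omega>) \<omega>) \<le> window_max s s' \<omega>"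
    using time_index_mono[OF assms] by (intro norm_le_window_max) simp
  then show ?thesis using norm_ge_zero by (rule order_trans[rotated])
qed

lemma window_max_le:
  assumes "\<omega> \<in> space M" "s \<le> s'" "\<And>m. m \<in> {time_index \<gamma> s \<omega> .. time_index \<gamma> s' \<omega>} \<Longrightarrow> norm (\<Theta> m \<omega>) \<le> e"
  shows "window_max s s' \<omega> \<le> e"
  using assms time_index_mono[OF assms(1,2)] unfolding window_max_def by (intro Max.boundedI) auto

text \<open>The index is required to be positive because \<open>\<gamma> 0\<close> is not assumed to be measurable.\<close>

definition large_step_event :: "real \<Rightarrow> real \<Rightarrow> 'a set" where
  "large_step_event \<eta> s = {\<omega>\<in>space M. \<exists>j\<ge>1. time_index \<gamma> s \<omega> = j \<and> \<eta> < \<gamma> j \<omega>}"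

lemma large_step_event_sets [measurable]: "large_step_event \<eta> s \<in> sets M"
proof -
  have "large_step_event \<eta> s
      = (\<Union>j\<in>{1..}. {\<omega>\<in>space M. time_index \<gamma> s \<omega> = j} \<inter> {\<omega>\<in>space M. \<eta> < \<gamma> j \<omega>})"
    by (auto simp: large_step_event_def)
  also have "\<dots> \<in> sets M"
    using gamma_measurable by (intro sets.countable_UN'' sets.Int) auto
  finally show ?thesis .
qed

lemma gamma_time_index_le_if_not_large_step:
  "\<omega> \<in> space M \<Longrightarrow> 0 < s \<Longrightarrow> \<omega> \<notin> large_step_event \<eta> s \<Longrightarrow> \<gamma> (time_index \<gamma> s \<omega>) \<omega> \<le> \<eta>"
  using time_index_pos[of s \<omega>] by (auto simp: large_step_event_def not_less)

lemma prob_large_step_event_tendsto_0: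
  assumes "0 < \<eta>" "0 < \<delta>"
  shows "(\<lambda>n. measure M (large_step_event \<eta> (real n * \<delta> - T))) \<longlonglongrightarrow> 0"
proof (rule measure_tendsto_0_if_eventually_notin)
  fix \<omega> assume \<omega>: "\<omega> \<in> space M"
  obtain J where J: "\<And>j. J \<le> j \<Longrightarrow> \<gamma> j \<omega> < \<eta>"
    using order_tendstoD(2)[OF gamma_tendsto_0[OF \<omega>] \<open>0 < \<eta>\<close>] by (auto simp: eventually_sequentially)
  have "\<forall>\<^sub>F n in sequentially. elapsed_time J \<omega> + T < real n * \<delta>"
    using \<open>0 < \<delta>\<close> by (rule eventually_less_real_mult_sequentially)
  then show "\<forall>\<^sub>F n in sequentially. \<omega> \<notin> large_step_event \<eta> (real n * \<delta> - T)"
  proof eventually_elim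
    case (elim n)
    have "J \<le> time_index \<gamma> (real n * \<delta> - T) \<omega>"
    proof (rule ccontr)
      assume "\<not> ?thesis"
      then have "elapsed_time (time_index \<gamma> (real n * \<delta> - T) \<omega>) \<omega> \<le> elapsed_time J \<omega>"
        by (intro elapsed_time_mono[OF \<omega>]) auto
      then show False using le_elapsed_time_time_index[OF \<omega>, of "real n * \<delta> - T"] elim by linarith
    qed
    then show ?case using J by (force simp: large_step_event_def)
  qed
qed simp

lemma window_max_le_if_controlled:
  assumes \<omega>: "\<omega> \<in> space M" "\<omega> \<in> confined R"
    and noise: "noise_sup_enn R \<omega> \<noteq> \<infinity>" "noise_sup R \<omega> \<le> K"
    and G: "\<And>\<theta>. norm \<theta> ^ 2 < R \<Longrightarrow> norm (g \<theta>) \<le> G"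
    and "\<eta> \<le> 1"
    and window: "0 < a" "a \<le> t" "t \<le> b"
    and step_small: "\<omega> \<notin> large_step_event \<eta> a"
    and mart_small: "\<And>j. \<bar>\<Sum>i=1..j. mart_incr R \<eta> a b i \<omega>\<bar> \<le> \<rho>"
    and error_small: "2 * \<eta> * (G^2 + K) * (b - a + 1) \<le> \<rho>"
    and decay: "R * exp (- 2 * c * (t - a - 1)) + 5 * \<rho> \<le> e\<^sup>2" and "0 \<le> e"
  shows "window_max t b \<omega> \<le> e"
proof (rule window_max_le[OF \<omega>(1) \<open>t \<le> b\<close>])
  fix m assume m: "m \<in> {time_index \<gamma> t \<omega> .. time_index \<gamma> b \<omega>}"
  have "norm (\<Theta> 0 \<omega>) ^ 2 < R" using \<omega>(2) by (simp add: confined_def)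
  then have "0 \<le> R" using zero_le_power2[of "norm (\<Theta> 0 \<omega>)"] by linarith
  have "norm (\<Theta> m \<omega>) ^ 2 \<le> R * exp (- 2 * c * (t - a - \<eta>)) + 5 * \<rho>"
  proof (rule norm_Theta_sq_window_le[OF \<omega> G _ \<open>\<eta> \<le> 1\<close> window _ mart_small error_small])
    show "norm (D n \<omega>) ^ 2 \<le> K" if "up_to_entrance R n \<omega>" for n
      using norm_D_sq_le_noise_sup[OF that noise(1)] noise(2) by linarith
    show "\<gamma> (time_index \<gamma> a \<omega>) \<omega> \<le> \<eta>"
      by (rule gamma_time_index_le_if_not_large_step[OF \<omega>(1) window(1) step_small])
  qed (use m in auto)
  also have "\<dots> \<le> R * exp (- 2 * c * (t - a - 1)) + 5 * \<rho>"
    using \<open>\<eta> \<le> 1\<close> c_pos \<open>0 \<le> R\<close> by (simp add: mult_left_mono)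
  finally have "norm (\<Theta> m \<omega>) ^ 2 \<le> e\<^sup>2" using decay by linarith
  then show "norm (\<Theta> m \<omega>) \<le> e" using \<open>0 \<le> e\<close> by (rule power2_le_imp_le)
qed

lemma prob_mart_deviation_small:
  assumes "0 < \<rho>" "a \<le> b" "b - a \<le> B" "0 < \<eta>" "\<eta> \<le> 1" "0 \<le> R"
    and variance_small: "\<eta> * R * (B + 1) * (\<integral>\<omega>. noise_sup R \<omega> \<partial>M) \<le> e * \<rho>\<^sup>2"
  shows "measure M {\<omega>\<in>space M. \<exists>j. \<rho> \<le> \<bar>\<Sum>i=1..j. mart_incr R \<eta> a b i \<omega>\<bar>} \<le> e"
proof -
  have "0 \<le> (\<integral>\<omega>. noise_sup R \<omega> \<partial>M)" by (intro integral_nonneg_AE) (simp add: noise_sup_nonneg)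
  then have "\<eta> * R * (b - a + \<eta>) * (\<integral>\<omega>. noise_sup R \<omega> \<partial>M)
      \<le> \<eta> * R * (B + 1) * (\<integral>\<omega>. noise_sup R \<omega> \<partial>M)"
    using assms(3-6) by (intro mult_right_mono mult_left_mono) auto
  then have "\<rho>\<^sup>2 * measure M {\<omega>\<in>space M. \<exists>j. \<rho> \<le> \<bar>\<Sum>i=1..j. mart_incr R \<eta> a b i \<omega>\<bar>} \<le> \<rho>\<^sup>2 * e"
    using prob_mart_deviation_le[OF \<open>0 < \<rho>\<close> \<open>a \<le> b\<close> _ \<open>0 \<le> R\<close>, of \<eta>] assms(4) variance_small
    by (simp add: mult.commute)
  then show ?thesis using \<open>0 < \<rho>\<close> by simp
qed

definition window_expectation :: "real \<Rightarrow> nat \<Rightarrow> real" where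
  "window_expectation \<delta> n =
    (\<integral>\<omega>. min 1 (window_max (real n * \<delta>) ((real n + 1) * \<delta>) \<omega> * indicator bounded_paths \<omega>) \<partial>M)"

lemma window_expectation_le:
  assumes "0 < e" "0 < \<delta>" "0 \<le> R" "0 < \<eta>" "\<eta> \<le> 1"
    and G: "\<And>\<theta>. norm \<theta> ^ 2 < R \<Longrightarrow> norm (g \<theta>) \<le> G"
    and error_small: "2 * \<eta> * (G^2 + K) * (T + \<delta> + 1) \<le> e\<^sup>2 / 10"
    and variance_small: "\<eta> * R * (T + \<delta> + 1) * (\<integral>\<omega>. noise_sup R \<omega> \<partial>M) \<le> e * (e\<^sup>2 / 10)\<^sup>2"
    and decay: "R * exp (- 2 * c * (T - 1)) \<le> e\<^sup>2 / 2"
    and n: "0 \<le> T" "T < real n * \<delta>"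
  shows "window_expectation \<delta> n \<le> e + measure M (bounded_paths - confined R)
    + measure M {\<omega>\<in>space M. K \<le> noise_sup R \<omega>}
    + measure M (large_step_event \<eta> (real n * \<delta> - T)) + e"
proof -
  define a t b where "a = real n * \<delta> - T" and "t = real n * \<delta>" and "b = (real n + 1) * \<delta>"
  have window: "0 < a" "a \<le> t" "t \<le> b" and "b - a = T + \<delta>" "t - a = T"
    using n \<open>0 < \<delta>\<close> by (auto simp: a_def t_def b_def algebra_simps)
  define \<rho> where "\<rho> = e\<^sup>2 / 10"
  have "0 < \<rho>" using \<open>0 < e\<close> by (simp add: \<rho>_def)
  define deviation where
    "deviation = {\<omega>\<in>space M. \<exists>j. \<rho> \<le> \<bar>\<Sum>i=1..j. mart_incr R \<eta> a b i \<omega>\<bar>}"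
  have P_deviation: "measure M deviation \<le> e"
    unfolding deviation_def using window \<open>b - a = T + \<delta>\<close> assms(3-5) variance_small
    by (intro prob_mart_deviation_small[OF \<open>0 < \<rho>\<close>, of a b "T + \<delta>"]) (auto simp: \<rho>_def add.assoc)
  have error_small': "2 * \<eta> * (G^2 + K) * (b - a + 1) \<le> \<rho>"
    using error_small \<open>b - a = T + \<delta>\<close> by (simp add: \<rho>_def add.assoc)
  have decay': "R * exp (- 2 * c * (t - a - 1)) + 5 * \<rho> \<le> e\<^sup>2"
    using decay \<open>t - a = T\<close> by (simp add: \<rho>_def)
  define bad where "bad = (bounded_paths - confined R) \<union> {\<omega>\<in>space M. K \<le> noise_sup R \<omega>}
    \<union> large_step_event \<eta> a \<union> deviation"
  have [measurable]: "deviation \<in> sets M" by (simp add: deviation_def)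
  have "window_expectation \<delta> n \<le> e + prob bad"
    unfolding window_expectation_def t_def[symmetric] b_def[symmetric]
  proof (rule expectation_le_if_small_off_event)
    show "AE \<omega> in M. \<omega> \<notin> bad \<longrightarrow> min 1 (window_max t b \<omega> * indicator bounded_paths \<omega>) \<le> e"
      using AE_noise_sup_enn_finite[of R] AE_space
    proof eventually_elim
      case (elim \<omega>)
      have "window_max t b \<omega> \<le> e" if "\<omega> \<notin> bad" "\<omega> \<in> bounded_paths"
      proof (rule window_max_le_if_controlled[OF elim(2) _ elim(1) _ G assms(5) window _ _
            error_small' decay'])
        show "\<omega> \<in> confined R" "noise_sup R \<omega> \<le> K" "\<omega> \<notin> large_step_event \<eta> a"
          using that elim(2) by (auto simp: bad_def)
        show "\<bar>\<Sum>i=1..j. mart_incr R \<eta> a b i \<omega>\<bar> \<le> \<rho>" for j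
          using that elim(2) by (auto simp: bad_def deviation_def not_le intro: less_imp_le)
        show "0 \<le> e" using assms(1) by (rule less_imp_le)
      qed
      then show ?case using \<open>0 < e\<close> by (auto simp: indicator_def)
    qed
    show "0 \<le> min 1 (window_max t b \<omega> * indicator bounded_paths \<omega>)
        \<and> min 1 (window_max t b \<omega> * indicator bounded_paths \<omega>) \<le> 1" if "\<omega> \<in> space M" for \<omega>
      using window_max_nonneg[OF that \<open>t \<le> b\<close>] by simp
  qed (use \<open>0 < e\<close> in \<open>simp_all add: bad_def\<close>)
  also have "prob bad \<le> prob ((bounded_paths - confined R) \<union> {\<omega>\<in>space M. K \<le> noise_sup R \<omega>}
      \<union> large_step_event \<eta> a) + prob deviation"
    unfolding bad_def by (rule measure_Un_le) simp_all
  also have "\<dots> \<le> prob ((bounded_paths - confined R) \<union> {\<omega>\<in>space M. K \<le> noise_sup R \<omega>})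
      + prob (large_step_event \<eta> a) + prob deviation"
    by (intro add_right_mono measure_Un_le) simp_all
  also have "\<dots> \<le> prob (bounded_paths - confined R) + prob {\<omega>\<in>space M. K \<le> noise_sup R \<omega>}
      + prob (large_step_event \<eta> a) + prob deviation"
    by (intro add_right_mono measure_Un_le) simp_all
  finally show ?thesis using P_deviation by (simp add: a_def)
qed

lemma window_expectation_eventually_le:
  assumes "0 < \<delta>" "0 < e"
  shows "\<forall>\<^sub>F n in sequentially. window_expectation \<delta> n \<le> 5 * e"
proof -
  obtain R where "1 \<le> R" and P_unconfined: "measure M (bounded_paths - confined R) \<le> e"
    using exists_confinement_level[OF \<open>0 < e\<close>] by blast
  obtain G where G: "\<And>\<theta>. norm \<theta> ^ 2 < R \<Longrightarrow> norm (g \<theta>) \<le> G"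
    using g_bounded_below_level by blast
  obtain K where "0 < K" and P_noise: "measure M {\<omega>\<in>space M. K \<le> noise_sup R \<omega>} \<le> e"
    using exists_noise_cap[OF \<open>0 < e\<close>] by blast
  define S where "S = (\<integral>\<omega>. noise_sup R \<omega> \<partial>M)"
  obtain T where "1 \<le> T" and decay: "R * exp (- (2 * c) * (T - 1)) \<le> e\<^sup>2 / 2"
    using exists_exp_decay_le[of "2 * c" "e\<^sup>2 / 2" R] c_pos \<open>0 < e\<close> by auto
  have "\<forall>\<^sub>F \<eta> in at_right 0. 0 < \<eta> \<and> \<eta> * 1 \<le> 1
      \<and> \<eta> * (2 * (G^2 + K) * (T + \<delta> + 1)) \<le> e\<^sup>2 / 10
      \<and> \<eta> * (R * (T + \<delta> + 1) * S) \<le> e * (e\<^sup>2 / 10)\<^sup>2"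
    using \<open>0 < e\<close>
    by (intro eventually_conj eventually_at_right_less eventually_mult_le_at_right_0) simp_all
  then obtain \<eta> where "0 < \<eta>" "\<eta> \<le> 1"
    and error_small: "2 * \<eta> * (G^2 + K) * (T + \<delta> + 1) \<le> e\<^sup>2 / 10"
    and variance_small: "\<eta> * R * (T + \<delta> + 1) * S \<le> e * (e\<^sup>2 / 10)\<^sup>2"
    using eventually_happens'[OF trivial_limit_at_right_real] by (auto simp: mult_ac)
  have "\<forall>\<^sub>F n in sequentially. measure M (large_step_event \<eta> (real n * \<delta> - T)) < e"
    using prob_large_step_event_tendsto_0[OF \<open>0 < \<eta>\<close> \<open>0 < \<delta>\<close>] \<open>0 < e\<close> by (rule order_tendstoD(2))
  moreover have "\<forall>\<^sub>F n in sequentially. T < real n * \<delta>"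
    using \<open>0 < \<delta>\<close> by (rule eventually_less_real_mult_sequentially)
  ultimately show ?thesis
  proof eventually_elim
    case (elim n)
    have "window_expectation \<delta> n \<le> e + measure M (bounded_paths - confined R)
      + measure M {\<omega>\<in>space M. K \<le> noise_sup R \<omega>}
      + measure M (large_step_event \<eta> (real n * \<delta> - T)) + e"
      using assms \<open>1 \<le> R\<close> \<open>0 < \<eta>\<close> \<open>\<eta> \<le> 1\<close> G error_small variance_small
        decay \<open>1 \<le> T\<close> elim(2)
      by (intro window_expectation_le) (auto simp: S_def)
    then show ?case using elim(1) P_unconfined P_noise by simp
  qed
qed

lemma window_expectation_tendsto_0: "0 < \<delta> \<Longrightarrow> window_expectation \<delta> \<longlonglongrightarrow> 0"
proof (rule tendsto_0_if_eventually_le)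
  assume "0 < \<delta>"
  have "real n * \<delta> \<le> (real n + 1) * \<delta>" for n using \<open>0 < \<delta>\<close> by (simp add: distrib_right)
  then show "\<forall>\<^sub>F n in sequentially. 0 \<le> window_expectation \<delta> n"
    unfolding window_expectation_def using window_max_nonneg
    by (intro always_eventually allI integral_nonneg_AE AE_I2) simp
  show "\<forall>\<^sub>F n in sequentially. window_expectation \<delta> n \<le> e" if "0 < e" for e
    using window_expectation_eventually_le[OF \<open>0 < \<delta>\<close>, of "e / 5"] that by simp
qed

lemma expectation_at_time_index_le_window:
  assumes "s \<le> t" "t \<le> s'"
  shows "(\<integral>\<omega>. min 1 (norm (\<Theta> (time_index \<gamma> t \<omega>) \<omega>) * indicator bounded_paths \<omega>) \<partial>M)
    \<le> (\<integral>\<omega>. min 1 (window_max s s' \<omega> * indicator bounded_paths \<omega>) \<partial>M)"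
proof (rule integral_mono)
  have [measurable]: "(\<lambda>\<omega>. \<Theta> (time_index \<gamma> t \<omega>) \<omega>) \<in> borel_measurable M"
    by (rule Theta_time_index_measurable)
  show "integrable M (\<lambda>\<omega>. min 1 (norm (\<Theta> (time_index \<gamma> t \<omega>) \<omega>) * indicator bounded_paths \<omega>))"
    by (rule integrable_min_1) simp_all
  show "integrable M (\<lambda>\<omega>. min 1 (window_max s s' \<omega> * indicator bounded_paths \<omega>))"
    using window_max_nonneg assms by (intro integrable_min_1) simp_all
  fix \<omega> assume "\<omega> \<in> space M"
  then have "norm (\<Theta> (time_index \<gamma> t \<omega>) \<omega>) \<le> window_max s s' \<omega>"
    using time_index_mono assms by (intro norm_le_window_max) auto
  then show "min 1 (norm (\<Theta> (time_index \<gamma> t \<omega>) \<omega>) * indicator bounded_paths \<omega>)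
      \<le> min 1 (window_max s s' \<omega> * indicator bounded_paths \<omega>)"
    by (auto simp: indicator_def)
qed

lemma expectation_at_time_index_nonneg:
  "0 \<le> (\<integral>\<omega>. min 1 (norm (\<Theta> (time_index \<gamma> t \<omega>) \<omega>) * indicator bounded_paths \<omega>) \<partial>M)"
  by (intro integral_nonneg_AE AE_I2) auto

lemma expectation_at_grid_tendsto_0:
  assumes "0 < \<delta>"
  shows "(\<lambda>n. \<integral>\<omega>. min 1 (norm (\<Theta> (time_index \<gamma> (real n * \<delta>) \<omega>) \<omega>) * indicator bounded_paths \<omega>) \<partial>M)
    \<longlonglongrightarrow> 0"
proof (rule tendsto_sandwich[OF _ _ tendsto_const window_expectation_tendsto_0[OF assms]])
  show "\<forall>\<^sub>F n in sequentially. window_expectation \<delta> n \<ge>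
      (\<integral>\<omega>. min 1 (norm (\<Theta> (time_index \<gamma> (real n * \<delta>) \<omega>) \<omega>) * indicator bounded_paths \<omega>) \<partial>M)"
    unfolding window_expectation_def using assms
    by (intro always_eventually allI expectation_at_time_index_le_window) (simp_all add: algebra_simps)
qed (simp add: expectation_at_time_index_nonneg)

lemma expectation_at_time_index_tendsto_0:
  "((\<lambda>t. \<integral>\<omega>. min 1 (norm (\<Theta> (time_index \<gamma> t \<omega>) \<omega>) * indicator bounded_paths \<omega>) \<partial>M) \<longlongrightarrow> 0) at_top"
proof -
  have floor: "filterlim (\<lambda>t::real. nat \<lfloor>t\<rfloor>) sequentially at_top"
    by (intro filterlim_compose[OF filterlim_nat_sequentially filterlim_floor_sequentially])
  have "window_expectation 1 \<longlonglongrightarrow> 0" by (rule window_expectation_tendsto_0) simp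
  from filterlim_compose[OF this floor]
  have lim: "((\<lambda>t::real. window_expectation 1 (nat \<lfloor>t\<rfloor>)) \<longlongrightarrow> 0) at_top" .
  have le: "\<forall>\<^sub>F t in at_top.
      (\<integral>\<omega>. min 1 (norm (\<Theta> (time_index \<gamma> t \<omega>) \<omega>) * indicator bounded_paths \<omega>) \<partial>M)
      \<le> window_expectation 1 (nat \<lfloor>t\<rfloor>)"
    using eventually_ge_at_top[of "0::real"]
  proof eventually_elim
    case (elim t)
    then have "real (nat \<lfloor>t\<rfloor>) = of_int \<lfloor>t\<rfloor>" by simp
    then have "real (nat \<lfloor>t\<rfloor>) * 1 \<le> t" "t \<le> (real (nat \<lfloor>t\<rfloor>) + 1) * 1"
      unfolding mult_1_right by linarith+
    then show ?case
      unfolding window_expectation_def by (rule expectation_at_time_index_le_window)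
  qed
  show ?thesis
    by (rule tendsto_sandwich[OF _ le tendsto_const lim]) (simp add: expectation_at_time_index_nonneg)
qed

end

theorem proposition4p6:
  fixes M :: "'a measure"
    and F :: "nat \<Rightarrow> 'a measure"
    and \<gamma> :: "nat \<Rightarrow> 'a \<Rightarrow> real"
    and g :: "real^'d \<Rightarrow> real^'d"
    and c :: real
    and D :: "nat \<Rightarrow> 'a \<Rightarrow> real^'d"
    and \<Theta> :: "nat \<Rightarrow> 'a \<Rightarrow> real^'d"
  assumes prob: "prob_space M"
    and filt_sub: "\<And>n. subalgebra M (F n)"
    and filt_mono: "\<And>n m. n \<le> m \<Longrightarrow> sets (F n) \<subseteq> sets (F m)"
    and gamma_meas: "\<And>n. n \<ge> 1 \<Longrightarrow> \<gamma> n \<in> borel_measurable (F (n - 1))"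
    and gamma_nonneg: "\<And>n \<omega>. n \<ge> 1 \<Longrightarrow> \<omega> \<in> space M \<Longrightarrow> \<gamma> n \<omega> \<ge> 0"
    and gamma_limsup: "\<And>\<omega>. \<omega> \<in> space M \<Longrightarrow> limsup (\<lambda>n. ereal (\<gamma> n \<omega>)) = 0"
    and gamma_sum: "\<And>\<omega>. \<omega> \<in> space M \<Longrightarrow> (\<Sum>n. ennreal (\<gamma> (Suc n) \<omega>)) = \<infinity>"
    and gamma_mono: "\<And>n \<omega>. n \<ge> 1 \<Longrightarrow> \<omega> \<in> space M \<Longrightarrow> \<gamma> (Suc n) \<omega> \<le> \<gamma> n \<omega>"
    and g_meas: "g \<in> borel_measurable borel"
    and g_locbdd: "locally_bounded g"
    and c_pos: "c > 0"
    and g_coercive: "\<And>\<theta>. inner \<theta> (g \<theta>) \<le> - c * norm \<theta> ^ 2"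
    and D_int: "\<And>n. n \<ge> 1 \<Longrightarrow> integrable M (D n)"
    and D_mart: "\<And>n i. n \<ge> 1 \<Longrightarrow>
        AE \<omega> in M. real_cond_exp M (F (n - 1)) (\<lambda>x. D n x $ i) \<omega> = 0"
    and Theta_adapted: "\<And>n. \<Theta> n \<in> borel_measurable (F n)"
    and Theta_rec: "\<And>n \<omega>. n \<ge> 1 \<Longrightarrow> \<omega> \<in> space M \<Longrightarrow>
        \<Theta> n \<omega> = \<Theta> (n - 1) \<omega> + \<gamma> n \<omega> *\<^sub>R g (\<Theta> (n - 1) \<omega>) + \<gamma> n \<omega> *\<^sub>R D n \<omega>"
    and D_sup_int: "\<And>R. (\<integral>\<^sup>+ \<omega>. (SUP n\<in>{n. n \<ge> 1 \<and> enat n \<le> entrance_time \<Theta> R \<omega>}.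
        ennreal (norm (D n \<omega>) ^ 2)) \<partial>M) < \<infinity>"
  defines "N \<equiv> time_index \<gamma>"
    and "E \<equiv> {\<omega> \<in> space M. bdd_above ((\<lambda>n. norm (\<Theta> n \<omega>)) ` {1..})}"
  shows "(\<forall>\<delta>>0. limsup (\<lambda>n. ereal (\<integral>\<omega>. min 1 (norm (\<Theta> (N (real n * \<delta>) \<omega>) \<omega>) * indicator E \<omega>) \<partial>M)) = 0)
    \<and> (\<forall>\<delta>>0. limsup (\<lambda>n. ereal (\<integral>\<omega>. min 1
            (Max ((\<lambda>m. norm (\<Theta> m \<omega>)) ` {N (real n * \<delta>) \<omega> .. N ((real n + 1) * \<delta>) \<omega>})
             * indicator E \<omega>) \<partial>M)) = 0)
    \<and> Limsup at_top (\<lambda>t::real. ereal (\<integral>\<omega>. min 1 (norm (\<Theta> (N t \<omega>) \<omega>) * indicator E \<omega>) \<partial>M)) = 0"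
proof -
  interpret stochastic_approximation M F \<gamma> g c D \<Theta>
    by (intro stochastic_approximation.intro filtered_finite_measure.intro prob_space.finite_measure
        filtered_finite_measure_axioms.intro stochastic_approximation_axioms.intro) (fact assms)+
  have "N = time_index \<gamma>" "E = bounded_paths"
    unfolding N_def E_def bounded_paths_def by simp_all
  then show ?thesis
    using expectation_at_grid_tendsto_0 expectation_at_time_index_tendsto_0
      window_expectation_tendsto_0[unfolded window_expectation_def window_max_def]
    by (simp add: Limsup_ereal_eq_0_if_tendsto)
qed

end
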